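(* Assume the standing hypotheses and definitions in the context. Then $G(t,H(t,x))=x$ for all $t\in\mathbb{R}$ and $x\in\mathbb{R}^n$.
   Context: Standing hypotheses: $A:\mathbb{R}\to\mathbb{R}^{n\times n}$ is continuous and bounded, $T(t,s)$ is the evolution operator of $x'=A(t)x$. $\mu:\mathbb{R}\to(0,\infty)$ is an increasing differentiable growth rate: $\mu(0)=1$, $\lim_{t\to-\infty}\mu(t)=0$, $\lim_{t\to+\infty}\mu(t)=+\infty$. The system $x'=A(t)x$ admits an algebraic dichotomy: projections $P(s)$, $Q(s)=I-P(s)$, constants $K,\alpha>0$ with $T(t,s)P(s)=P(t)T(t,s)$, $\|T(t,s)P(s)\|\le K(\mu(t)/\mu(s))^{-\alpha}$ ($t\ge s$), $\|T(t,s)Q(s)\|\le K(\mu(s)/\mu(t))^{-\alpha}$ ($t\le s$). $f:\mathbb{R}\times\mathbb{R}^n\to\mathbb{R}^n$ is continuous, $\|f(t,x)\|\le\beta\mu'(t)\mu^{-1}(t)$, $\|f(t,x_1)-f(t,x_2)\|\le\gamma\mu'(t)\mu^{-1}(t)\|x_1-x_2\|$ for constants $\beta,\gamma\ge0$, and $6K\gamma\alpha^{-1}<1$. $X(t,\tau,\xi)$ (resp. $Y(t,\tau,\xi)$) is the solution of $x'=A(t)x+f(t,x)$ (resp. $x'=A(t)x$) with value $\xi$ at $t=\tau$. $h(t,(\tau,\xi))$ is the unique solution bounded on $\mathbb{R}$ of $Z'=A(t)Z-f(t,X(t,\tau,\xi))$, and $g(t,(\tau,\xi))$ the unique solution bounded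 on $\mathbb{R}$ of $Z'=A(t)Z+f(t,Y(t,\tau,\xi)+Z)$ (both exist and are unique under these hypotheses). Define $H(t,x)=x+h(t,(t,x))$ and $G(t,y)=y+g(t,(t,y))$. *)

theory Defs
  imports "HOL-Analysis.Analysis"
begin

definition opnorm :: "real^'n^'n \<Rightarrow> real" where
  "opnorm M = onorm (\<lambda>x. M *v x)"

definition Ysol :: "(real \<Rightarrow> real^'n^'n) \<Rightarrow> real \<Rightarrow> real^'n \<Rightarrow> real \<Rightarrow> real^'n" where
  "Ysol A \<tau> \<xi> = (THE x. x \<tau> = \<xi> \<and>
      (\<forall>t. (x has_vector_derivative (A t *v x t)) (at t)))"

definition Xsol :: "(real \<Rightarrow> real^'n^'n) \<Rightarrow> (real \<Rightarrow> real^'n \<Rightarrow> real^'n)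
      \<Rightarrow> real \<Rightarrow> real^'n \<Rightarrow> real \<Rightarrow> real^'n" where
  "Xsol A f \<tau> \<xi> = (THE x. x \<tau> = \<xi> \<and>
      (\<forall>t. (x has_vector_derivative (A t *v x t + f t (x t))) (at t)))"

definition hsol :: "(real \<Rightarrow> real^'n^'n) \<Rightarrow> (real \<Rightarrow> real^'n \<Rightarrow> real^'n)
      \<Rightarrow> real \<Rightarrow> real^'n \<Rightarrow> real \<Rightarrow> real^'n" where
  "hsol A f \<tau> \<xi> = (THE z. bounded (range z) \<and>
      (\<forall>t. (z has_vector_derivative (A t *v z t - f t (Xsol A f \<tau> \<xi> t))) (at t)))"

definition gsol :: "(real \<Rightarrow> real^'n^'n) \<Rightarrow> (real \<Rightarrow> real^'n \<Rightarrow> real^'n)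
      \<Rightarrow> real \<Rightarrow> real^'n \<Rightarrow> real \<Rightarrow> real^'n" where
  "gsol A f \<tau> \<xi> = (THE z. bounded (range z) \<and>
      (\<forall>t. (z has_vector_derivative (A t *v z t + f t (Ysol A \<tau> \<xi> t + z t))) (at t)))"

definition Hmap :: "(real \<Rightarrow> real^'n^'n) \<Rightarrow> (real \<Rightarrow> real^'n \<Rightarrow> real^'n)
      \<Rightarrow> real \<Rightarrow> real^'n \<Rightarrow> real^'n" where
  "Hmap A f t x = x + hsol A f t x t"

definition Gmap :: "(real \<Rightarrow> real^'n^'n) \<Rightarrow> (real \<Rightarrow> real^'n \<Rightarrow> real^'n)
      \<Rightarrow> real \<Rightarrow> real^'n \<Rightarrow> real^'n" where
  "Gmap A f t y = y + gsol A f t y t"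

end

theory Submission
  imports Defs
begin

(* The solution X of the perturbed equation through (t, x) exists for all times: its vector
   field is Lipschitz with rate a + (beta + gamma) mu'/mu, whose antiderivative
   psi = a t + (beta + gamma) ln mu is finite, so the Picard operator is a contraction in the
   space weighted by exp (2 |psi s - psi t|).  Under the algebraic dichotomy an inhomogeneity
   bounded by b mu'/mu has a bounded solution (the Green function integral), and a bounded solution
   of z' = A z + Phi(s, z), with Phi Lipschitz of rate c mu'/mu, is unique once 2 K c / alpha < 1:
   projecting the variation of constants formula from -infinity and from +infinity bounds
   sup |z1 - z2| by (2 K c / alpha) sup |z1 - z2|.
   Now H(t, x) = X t + h t, the linear solution through H(t, x) is X + h, and -h is a bounded
   solution of the equation defining g(., (t, H(t, x))).  Hence g = -h and
   G(t, H(t, x)) = X t + h t - h t = x. *)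

lemma bounded_bilinear_matrix_vector_mult:
  "bounded_bilinear (\<lambda>(M::real^'n^'m) (v::real^'n). M *v v)"
  unfolding bilinear_conv_bounded_bilinear[symmetric] bilinear_def
  by (auto intro!: linearI simp: matrix_vector_right_distrib matrix_vector_mult_add_rdistrib
      vec_eq_iff matrix_vector_mult_def sum_distrib_left sum.distrib algebra_simps)

lemma norm_matrix_vector_le_opnorm: "norm (M *v v) \<le> opnorm M * norm v"
  unfolding opnorm_def by (rule onorm) simp

lemma continuous_on_if_has_vector_derivative:
  "(\<And>t. (x has_vector_derivative x' t) (at t)) \<Longrightarrow> continuous_on UNIV x"
  by (rule continuous_at_imp_continuous_on) (use has_vector_derivative_continuous in blast)

lemma continuous_on_curried_comp:
  assumes "continuous_on UNIV (\<lambda>(t, x). F t x)" and "continuous_on UNIV x"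
  shows "continuous_on UNIV (\<lambda>t. F t (x t))"
proof -
  have "continuous_on UNIV (\<lambda>t. (t, x t))"
    using assms(2) by (intro continuous_intros)
  then show ?thesis
    using continuous_on_compose2[OF assms(1), of UNIV "\<lambda>t. (t, x t)"] by auto
qed

lemma le_if_eventually_le_tendsto_zero:
  fixes g :: "'a \<Rightarrow> real"
  assumes "F \<noteq> bot" "(g \<longlongrightarrow> 0) F" "\<forall>\<^sub>F r in F. x \<le> g r + y"
  shows "x \<le> y"
  using tendsto_le[OF assms(1) tendsto_add[OF assms(2) tendsto_const[of y]] tendsto_const assms(3)]
  by simp

lemma convergent_if_tail_bound:
  fixes X :: "nat \<Rightarrow> 'a::banach"
  assumes bound: "\<And>m n. n \<le> m \<Longrightarrow> norm (X m - X n) \<le> e n" and "e \<longlonglongrightarrow> 0"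
  shows "convergent X"
proof (rule Cauchy_convergent, rule CauchyI)
  fix \<epsilon> :: real assume "0 < \<epsilon>"
  then have "\<forall>\<^sub>F n in sequentially. e n < \<epsilon> / 2"
    using order_tendstoD(2)[OF \<open>e \<longlonglongrightarrow> 0\<close>, of "\<epsilon> / 2"] by simp
  then obtain N where N: "e N < \<epsilon> / 2" by (auto simp: eventually_sequentially)
  show "\<exists>M. \<forall>m\<ge>M. \<forall>n\<ge>M. norm (X m - X n) < \<epsilon>"
  proof (intro exI allI impI)
    fix m n assume "N \<le> m" "N \<le> n"
    then have "norm (X m - X N) \<le> e N" "norm (X n - X N) \<le> e N" using bound by auto
    moreover have "norm (X m - X n) \<le> norm (X m - X N) + norm (X n - X N)"
      using norm_triangle_ineq4[of "X m - X N" "X n - X N"] by simp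
    ultimately show "norm (X m - X n) < \<epsilon>" using N by linarith
  qed
qed

section \<open>Gronwall estimates\<close>

lemma mult_exp_neg_nonincreasing:
  fixes q \<phi> :: "real \<Rightarrow> real"
  assumes "s \<le> t"
    and q: "\<And>u. u \<in> {s..t} \<Longrightarrow> (q has_real_derivative q' u) (at u)"
    and \<phi>: "\<And>u. u \<in> {s..t} \<Longrightarrow> (\<phi> has_real_derivative \<phi>' u) (at u)"
    and le: "\<And>u. u \<in> {s..t} \<Longrightarrow> q' u \<le> \<phi>' u * q u"
  shows "q t * exp (- \<phi> t) \<le> q s * exp (- \<phi> s)"
proof (rule DERIV_nonpos_imp_nonincreasing[OF \<open>s \<le> t\<close>])
  fix u assume "s \<le> u" "u \<le> t"
  then have u: "u \<in> {s..t}" by simp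
  have "((\<lambda>u. q u * exp (- \<phi> u)) has_real_derivative (q' u - \<phi>' u * q u) * exp (- \<phi> u)) (at u)"
    by (rule derivative_eq_intros q[OF u] \<phi>[OF u] refl | simp add: algebra_simps)+
  moreover have "(q' u - \<phi>' u * q u) * exp (- \<phi> u) \<le> 0"
    using le[OF u] by (simp add: mult_nonpos_nonneg)
  ultimately show "\<exists>y. ((\<lambda>u. q u * exp (- \<phi> u)) has_real_derivative y) (at u) \<and> y \<le> 0"
    by blast
qed

lemma gronwall_two_sided:
  fixes q \<phi> :: "real \<Rightarrow> real"
  assumes "s \<le> t"
    and q: "\<And>u. u \<in> {s..t} \<Longrightarrow> (q has_real_derivative q' u) (at u)"
    and \<phi>: "\<And>u. u \<in> {s..t} \<Longrightarrow> (\<phi> has_real_derivative \<phi>' u) (at u)"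
    and le: "\<And>u. u \<in> {s..t} \<Longrightarrow> \<bar>q' u\<bar> \<le> \<phi>' u * q u"
  shows "q t \<le> exp (\<phi> t - \<phi> s) * q s"
    and "q s \<le> exp (\<phi> t - \<phi> s) * q t"
proof -
  have exp_shift: "a \<le> exp (x - y) * b" if "a * exp (- x) \<le> b * exp (- y)" for a b x y :: real
  proof -
    have "a * exp (- x) * exp x \<le> b * exp (- y) * exp x"
      using that by (rule mult_right_mono) simp
    then show ?thesis by (simp add: mult.assoc exp_add[symmetric] exp_diff field_simps)
  qed
  have upper: "q' u \<le> \<phi>' u * q u" and lower: "- q' u \<le> - \<phi>' u * - q u" if "u \<in> {s..t}" for u
    using le[OF that] by (auto simp: abs_le_iff)
  have q_neg: "((\<lambda>u. - q u) has_real_derivative - q' u) (at u)"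
    and \<phi>_neg: "((\<lambda>u. - \<phi> u) has_real_derivative - \<phi>' u) (at u)" if "u \<in> {s..t}" for u
    using DERIV_minus[OF q[OF that]] DERIV_minus[OF \<phi>[OF that]] by auto
  show "q t \<le> exp (\<phi> t - \<phi> s) * q s"
    using mult_exp_neg_nonincreasing[OF \<open>s \<le> t\<close> q \<phi> upper] by (rule exp_shift)
  have "- q t * exp (- (- \<phi> t)) \<le> - q s * exp (- (- \<phi> s))"
    by (rule mult_exp_neg_nonincreasing[OF \<open>s \<le> t\<close> q_neg \<phi>_neg lower])
  then show "q s \<le> exp (\<phi> t - \<phi> s) * q t"
    using exp_shift[where a = "q s" and b = "q t" and x = "- \<phi> s" and y = "- \<phi> t"] by simp
qed

lemma gronwall_norm_bounds:
  fixes w :: "real \<Rightarrow> 'a::real_inner"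
  assumes "s \<le> t"
    and w: "\<And>u. u \<in> {s..t} \<Longrightarrow> (w has_vector_derivative w' u) (at u)"
    and \<psi>: "\<And>u. u \<in> {s..t} \<Longrightarrow> (\<psi> has_real_derivative \<psi>' u) (at u)"
    and le: "\<And>u. u \<in> {s..t} \<Longrightarrow> norm (w' u) \<le> \<psi>' u * norm (w u)"
  shows "norm (w t) \<le> exp (\<psi> t - \<psi> s) * norm (w s)"
    and "norm (w s) \<le> exp (\<psi> t - \<psi> s) * norm (w t)"
proof -
  define q where "q = (\<lambda>u. w u \<bullet> w u)"
  have q: "(q has_real_derivative 2 * (w u \<bullet> w' u)) (at u)" if "u \<in> {s..t}" for u
  proof -
    have "((\<lambda>u. w u \<bullet> w u) has_vector_derivative w u \<bullet> w' u + w' u \<bullet> w u) (at u)"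
      by (rule bounded_bilinear.has_vector_derivative[OF bounded_bilinear_inner w[OF that] w[OF that]])
    then show ?thesis
      by (simp add: q_def has_real_derivative_iff_has_vector_derivative inner_commute)
  qed
  have \<phi>: "((\<lambda>u. 2 * \<psi> u) has_real_derivative 2 * \<psi>' u) (at u)" if "u \<in> {s..t}" for u
    using DERIV_cmult[OF \<psi>[OF that]] .
  have q'_le: "\<bar>2 * (w u \<bullet> w' u)\<bar> \<le> 2 * \<psi>' u * q u" if "u \<in> {s..t}" for u
  proof -
    have "\<bar>w u \<bullet> w' u\<bar> \<le> norm (w u) * (\<psi>' u * norm (w u))"
      using Cauchy_Schwarz_ineq2[of "w u" "w' u"] mult_left_mono[OF le[OF that] norm_ge_zero[of "w u"]]
      by linarith
    then show ?thesis by (simp add: q_def power2_eq_square power2_norm_eq_inner[symmetric] algebra_simps)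
  qed
  note bounds = gronwall_two_sided[OF \<open>s \<le> t\<close> q \<phi> q'_le]
  have sq: "(exp (\<psi> t - \<psi> s) * norm v)\<^sup>2 = exp (2 * \<psi> t - 2 * \<psi> s) * (v \<bullet> v)" for v :: 'a
    by (simp add: power_mult_distrib power2_norm_eq_inner exp_double[symmetric] algebra_simps)
  have "(norm (w t))\<^sup>2 \<le> (exp (\<psi> t - \<psi> s) * norm (w s))\<^sup>2"
    using bounds(1) by (simp add: sq q_def power2_norm_eq_inner)
  then show "norm (w t) \<le> exp (\<psi> t - \<psi> s) * norm (w s)"
    by (rule power2_le_imp_le) simp
  have "(norm (w s))\<^sup>2 \<le> (exp (\<psi> t - \<psi> s) * norm (w t))\<^sup>2"
    using bounds(2) by (simp add: sq q_def power2_norm_eq_inner)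
  then show "norm (w s) \<le> exp (\<psi> t - \<psi> s) * norm (w t)"
    by (rule power2_le_imp_le) simp
qed

lemma ode_solutions_eq:
  fixes x y :: "real \<Rightarrow> 'a::real_inner"
  assumes x: "\<And>t. (x has_vector_derivative F t (x t)) (at t)"
    and y: "\<And>t. (y has_vector_derivative F t (y t)) (at t)"
    and lip: "\<And>t u v. norm (F t u - F t v) \<le> L t * norm (u - v)"
    and \<psi>: "\<And>t. (\<psi> has_real_derivative L t) (at t)"
    and "x \<tau> = y \<tau>"
  shows "x t = y t"
proof -
  have w: "((\<lambda>u. x u - y u) has_vector_derivative F u (x u) - F u (y u)) (at u)" for u
    by (rule has_vector_derivative_diff[OF x y])
  have "norm (x t - y t) \<le> 0"
  proof (cases "\<tau> \<le> t")
    case True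
    from gronwall_norm_bounds(1)[OF True w \<psi> lip] show ?thesis using \<open>x \<tau> = y \<tau>\<close> by simp
  next
    case False
    from gronwall_norm_bounds(2)[of t \<tau>, OF _ w \<psi> lip] False show ?thesis using \<open>x \<tau> = y \<tau>\<close> by simp
  qed
  then show ?thesis by simp
qed

section \<open>Signed integrals\<close>

lemma integrable_on_interval_if_continuous:
  fixes g :: "real \<Rightarrow> 'a::banach"
  shows "continuous_on UNIV g \<Longrightarrow> g integrable_on {a..b}"
  by (rule integrable_continuous_interval) (auto intro: continuous_on_subset)

lemma norm_integral_le_antiderivative_diff:
  fixes g :: "real \<Rightarrow> 'a::banach"
  assumes "a \<le> b" and g: "continuous_on UNIV g"
    and \<Phi>: "\<And>\<sigma>. \<sigma> \<in> {a..b} \<Longrightarrow> (\<Phi> has_real_derivative \<phi> \<sigma>) (at \<sigma>)"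
    and le: "\<And>\<sigma>. \<sigma> \<in> {a..b} \<Longrightarrow> norm (g \<sigma>) \<le> \<phi> \<sigma>"
  shows "norm (integral {a..b} g) \<le> \<Phi> b - \<Phi> a"
proof -
  have \<phi>: "(\<phi> has_integral \<Phi> b - \<Phi> a) {a..b}"
    by (rule fundamental_theorem_of_calculus[OF \<open>a \<le> b\<close>])
       (simp add: has_real_derivative_iff_has_vector_derivative[symmetric]
          has_field_derivative_at_within[OF \<Phi>])
  have "norm (integral {a..b} g) \<le> integral {a..b} \<phi>"
    using integrable_on_interval_if_continuous[OF g] \<phi> le
    by (intro integral_norm_bound_integral) auto
  with \<phi> show ?thesis by (simp add: integral_unique)
qed

definition signed_integral :: "real \<Rightarrow> (real \<Rightarrow> 'a::banach) \<Rightarrow> real \<Rightarrow> 'a" where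
  "signed_integral \<tau> g s = integral {\<tau>..s} g - integral {s..\<tau>} g"

lemma signed_integral_self [simp]: "signed_integral \<tau> g \<tau> = 0"
  by (simp add: signed_integral_def)

lemma signed_integral_forward: "\<tau> \<le> s \<Longrightarrow> signed_integral \<tau> g s = integral {\<tau>..s} g"
  by (cases "\<tau> = s") (auto simp: signed_integral_def)

lemma signed_integral_backward: "s \<le> \<tau> \<Longrightarrow> signed_integral \<tau> g s = - integral {s..\<tau>} g"
  by (cases "\<tau> = s") (auto simp: signed_integral_def)

lemma signed_integral_eq_integral_diff:
  fixes g :: "real \<Rightarrow> 'a::banach"
  assumes g: "continuous_on UNIV g" and "c \<le> s" "c \<le> \<tau>"
  shows "signed_integral \<tau> g s = integral {c..s} g - integral {c..\<tau>} g"
proof (cases "\<tau> \<le> s")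
  case True
  have "integral {c..\<tau>} g + integral {\<tau>..s} g = integral {c..s} g"
    by (rule Henstock_Kurzweil_Integration.integral_combine)
       (use assms True integrable_on_interval_if_continuous[OF g] in auto)
  then show ?thesis using True by (simp add: signed_integral_forward algebra_simps)
next
  case False
  have "integral {c..s} g + integral {s..\<tau>} g = integral {c..\<tau>} g"
    by (rule Henstock_Kurzweil_Integration.integral_combine)
       (use assms False integrable_on_interval_if_continuous[OF g] in auto)
  then show ?thesis using False by (simp add: signed_integral_backward algebra_simps)
qed

lemma signed_integral_diff:
  fixes g :: "real \<Rightarrow> 'a::banach"
  assumes g: "continuous_on UNIV g" and "r \<le> s"
  shows "signed_integral \<tau> g s - signed_integral \<tau> g r = integral {r..s} g"
proof -
  let ?c = "min r \<tau>"
  have s: "signed_integral \<tau> g s = integral {?c..s} g - integral {?c..\<tau>} g"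
    and r: "signed_integral \<tau> g r = integral {?c..r} g - integral {?c..\<tau>} g"
    using \<open>r \<le> s\<close> by (auto intro!: signed_integral_eq_integral_diff[OF g])
  have "integral {?c..r} g + integral {r..s} g = integral {?c..s} g"
    by (rule Henstock_Kurzweil_Integration.integral_combine)
       (use \<open>r \<le> s\<close> integrable_on_interval_if_continuous[OF g] in auto)
  then show ?thesis
    unfolding s r by (simp add: algebra_simps)
qed

lemma signed_integral_has_vector_derivative:
  fixes g :: "real \<Rightarrow> 'a::banach"
  assumes g: "continuous_on UNIV g"
  shows "(signed_integral \<tau> g has_vector_derivative g s) (at s)"
proof -
  define c where "c = min s \<tau> - 1"
  have "((\<lambda>u. integral {c..u} g) has_vector_derivative g s) (at s within {c..s + 1})"
    by (rule integral_has_vector_derivative[OF continuous_on_subset[OF g]]) (auto simp: c_def)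
  moreover have "at s within {c..s + 1} = at s"
    by (rule at_within_interior) (auto simp: c_def)
  ultimately have "((\<lambda>u. integral {c..u} g - integral {c..\<tau>} g) has_vector_derivative g s) (at s)"
    by (auto intro!: derivative_eq_intros)
  then show ?thesis
  proof (rule has_vector_derivative_transform_within_open[of _ _ _ "{c<..}"])
    fix u assume "u \<in> {c<..}"
    then show "integral {c..u} g - integral {c..\<tau>} g = signed_integral \<tau> g u"
      using signed_integral_eq_integral_diff[OF g, of c u \<tau>] by (simp add: c_def)
  qed (auto simp: c_def)
qed

lemma continuous_on_signed_integral:
  fixes g :: "real \<Rightarrow> 'a::banach"
  shows "continuous_on UNIV g \<Longrightarrow> continuous_on UNIV (signed_integral \<tau> g)"
  using signed_integral_has_vector_derivative has_vector_derivative_continuous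
  by (blast intro: continuous_at_imp_continuous_on)

lemma signed_integral_linear:
  fixes g :: "real \<Rightarrow> 'a::banach" and h :: "'a \<Rightarrow> 'b::banach"
  assumes g: "continuous_on UNIV g" and h: "bounded_linear h"
  shows "h (signed_integral \<tau> g s) = signed_integral \<tau> (\<lambda>\<sigma>. h (g \<sigma>)) s"
  using integral_linear[OF integrable_on_interval_if_continuous[OF g] h, of \<tau> s]
    integral_linear[OF integrable_on_interval_if_continuous[OF g] h, of s \<tau>]
  by (simp add: signed_integral_def o_def linear_diff[OF bounded_linear.linear[OF h]])

lemma signed_integral_diff_fun:
  fixes g k :: "real \<Rightarrow> 'a::banach"
  assumes "continuous_on UNIV g" "continuous_on UNIV k"
  shows "signed_integral \<tau> (\<lambda>\<sigma>. g \<sigma> - k \<sigma>) s = signed_integral \<tau> g s - signed_integral \<tau> k s"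
  using integral_diff[OF integrable_on_interval_if_continuous[OF assms(1)]
      integrable_on_interval_if_continuous[OF assms(2)]]
  by (simp add: signed_integral_def)

section \<open>Global solutions of Lipschitz equations\<close>

locale lipschitz_ode =
  fixes F :: "real \<Rightarrow> 'a::{real_inner, banach} \<Rightarrow> 'a" and L \<psi> :: "real \<Rightarrow> real"
  assumes F_cont: "continuous_on UNIV (\<lambda>(t, x). F t x)"
    and \<psi>_deriv: "\<And>t. (\<psi> has_real_derivative L t) (at t)"
    and L_nonneg: "\<And>t. L t \<ge> 0"
    and F_lipschitz: "\<And>t x y. norm (F t x - F t y) \<le> L t * norm (x - y)"
    and F_growth: "\<And>t x. norm (F t x) \<le> L t * (norm x + 1)"
begin

lemma \<psi>_mono: "s \<le> t \<Longrightarrow> \<psi> s \<le> \<psi> t"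
  using DERIV_nonneg_imp_nondecreasing[of s t \<psi>] \<psi>_deriv L_nonneg by blast

definition weight :: "real \<Rightarrow> real \<Rightarrow> real" where
  "weight \<tau> s = exp (2 * \<bar>\<psi> s - \<psi> \<tau>\<bar>)"

lemma weight_ge_1: "weight \<tau> s \<ge> 1"
  by (simp add: weight_def)

lemma continuous_on_weight: "continuous_on UNIV (weight \<tau>)"
proof -
  have "continuous_on UNIV \<psi>"
    using \<psi>_deriv DERIV_isCont by (blast intro: continuous_at_imp_continuous_on)
  then show ?thesis unfolding weight_def by (intro continuous_intros)
qed

text \<open>Away from \<open>\<tau>\<close> the weight satisfies \<open>\<partial>\<^sub>s weight = 2 L weight\<close>, so integrating \<open>L\<close> against it costs
  only \<open>weight / 2\<close>: this makes the Picard map below a \<open>1/2\<close>-contraction.\<close>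

lemma norm_signed_integral_le_weight:
  assumes k: "continuous_on UNIV k" and "D \<ge> 0"
    and le: "\<And>\<sigma>. norm (k \<sigma>) \<le> D * L \<sigma> * weight \<tau> \<sigma>"
  shows "norm (signed_integral \<tau> k s) \<le> D * (weight \<tau> s - 1) / 2"
proof (cases "\<tau> \<le> s")
  case True
  have "norm (signed_integral \<tau> k s) = norm (integral {\<tau>..s} k)"
    by (simp add: signed_integral_forward[OF True])
  also have "\<dots> \<le> D * exp (2 * (\<psi> s - \<psi> \<tau>)) / 2 - D * exp (2 * (\<psi> \<tau> - \<psi> \<tau>)) / 2"
  proof (rule norm_integral_le_antiderivative_diff[OF True k])
    fix \<sigma> assume "\<sigma> \<in> {\<tau>..s}"
    then show "((\<lambda>\<sigma>. D * exp (2 * (\<psi> \<sigma> - \<psi> \<tau>)) / 2) has_real_derivative D * L \<sigma> * weight \<tau> \<sigma>) (at \<sigma>)"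
      using \<psi>_mono[of \<tau> \<sigma>] by (auto intro!: derivative_eq_intros \<psi>_deriv simp: weight_def)
  qed (rule le)
  also have "\<dots> = D * (weight \<tau> s - 1) / 2"
    using \<psi>_mono[OF True] by (simp add: weight_def field_simps)
  finally show ?thesis .
next
  case False
  then have "s \<le> \<tau>" by simp
  have "norm (signed_integral \<tau> k s) = norm (integral {s..\<tau>} k)"
    by (simp add: signed_integral_backward[OF \<open>s \<le> \<tau>\<close>])
  also have "\<dots> \<le> - D * exp (2 * (\<psi> \<tau> - \<psi> \<tau>)) / 2 - - D * exp (2 * (\<psi> \<tau> - \<psi> s)) / 2"
  proof (rule norm_integral_le_antiderivative_diff[OF \<open>s \<le> \<tau>\<close> k])
    fix \<sigma> assume "\<sigma> \<in> {s..\<tau>}"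
    then show "((\<lambda>\<sigma>. - D * exp (2 * (\<psi> \<tau> - \<psi> \<sigma>)) / 2) has_real_derivative D * L \<sigma> * weight \<tau> \<sigma>) (at \<sigma>)"
      using \<psi>_mono[of \<sigma> \<tau>] by (auto intro!: derivative_eq_intros \<psi>_deriv simp: weight_def)
  qed (rule le)
  also have "\<dots> = D * (weight \<tau> s - 1) / 2"
    using \<psi>_mono[OF \<open>s \<le> \<tau>\<close>] by (simp add: weight_def field_simps)
  finally show ?thesis .
qed

text \<open>The Picard map for \<open>x = \<xi> + \<integral>\<^sub>\<tau> F(\<sigma>, x(\<sigma>))\<close> acts on \<open>u = x / weight\<close>, which is bounded
  although \<open>x\<close> need not be.\<close>

definition picard_integrand :: "real \<Rightarrow> (real \<Rightarrow>\<^sub>C 'a) \<Rightarrow> real \<Rightarrow> 'a" where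
  "picard_integrand \<tau> u \<sigma> = F \<sigma> (weight \<tau> \<sigma> *\<^sub>R u \<sigma>)"

lemma continuous_on_picard_integrand: "continuous_on UNIV (picard_integrand \<tau> u)"
  unfolding picard_integrand_def
  by (intro continuous_on_curried_comp[OF F_cont] continuous_on_scaleR continuous_on_weight
      continuous_on_apply_bcontfun)

lemma norm_picard_integrand_le: "norm (picard_integrand \<tau> u \<sigma>) \<le> (norm u + 1) * L \<sigma> * weight \<tau> \<sigma>"
proof -
  have "weight \<tau> \<sigma> * norm (u \<sigma>) \<le> weight \<tau> \<sigma> * norm u"
    using weight_ge_1[of \<tau> \<sigma>] by (intro mult_left_mono norm_bounded) simp
  moreover have "norm (weight \<tau> \<sigma> *\<^sub>R u \<sigma>) = weight \<tau> \<sigma> * norm (u \<sigma>)"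
    using weight_ge_1[of \<tau> \<sigma>] by simp
  ultimately have "norm (weight \<tau> \<sigma> *\<^sub>R u \<sigma>) + 1 \<le> weight \<tau> \<sigma> * norm u + weight \<tau> \<sigma>"
    using weight_ge_1[of \<tau> \<sigma>] by linarith
  then have "norm (weight \<tau> \<sigma> *\<^sub>R u \<sigma>) + 1 \<le> weight \<tau> \<sigma> * (norm u + 1)"
    by (simp add: distrib_left)
  then have "L \<sigma> * (norm (weight \<tau> \<sigma> *\<^sub>R u \<sigma>) + 1) \<le> L \<sigma> * (weight \<tau> \<sigma> * (norm u + 1))"
    by (rule mult_left_mono) (rule L_nonneg)
  with F_growth[of \<sigma> "weight \<tau> \<sigma> *\<^sub>R u \<sigma>"] show ?thesis
    unfolding picard_integrand_def by (simp add: algebra_simps)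
qed

lemma norm_picard_integrand_diff_le:
  "norm (picard_integrand \<tau> u \<sigma> - picard_integrand \<tau> v \<sigma>) \<le> dist u v * L \<sigma> * weight \<tau> \<sigma>"
proof -
  have "norm (weight \<tau> \<sigma> *\<^sub>R u \<sigma> - weight \<tau> \<sigma> *\<^sub>R v \<sigma>) \<le> weight \<tau> \<sigma> * dist u v"
    using weight_ge_1[of \<tau> \<sigma>] by (simp add: scaleR_diff_right[symmetric] dist_norm[symmetric] dist_bounded)
  then have "L \<sigma> * norm (weight \<tau> \<sigma> *\<^sub>R u \<sigma> - weight \<tau> \<sigma> *\<^sub>R v \<sigma>) \<le> L \<sigma> * (weight \<tau> \<sigma> * dist u v)"
    by (rule mult_left_mono) (rule L_nonneg)
  with F_lipschitz[of \<sigma> "weight \<tau> \<sigma> *\<^sub>R u \<sigma>" "weight \<tau> \<sigma> *\<^sub>R v \<sigma>"] show ?thesis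
    unfolding picard_integrand_def by (simp add: algebra_simps)
qed

definition picard :: "real \<Rightarrow> 'a \<Rightarrow> (real \<Rightarrow>\<^sub>C 'a) \<Rightarrow> (real \<Rightarrow>\<^sub>C 'a)" where
  "picard \<tau> \<xi> u = Bcontfun (\<lambda>s. (1 / weight \<tau> s) *\<^sub>R (\<xi> + signed_integral \<tau> (picard_integrand \<tau> u) s))"

lemma picard_apply:
  "picard \<tau> \<xi> u s = (1 / weight \<tau> s) *\<^sub>R (\<xi> + signed_integral \<tau> (picard_integrand \<tau> u) s)"
proof -
  have "(\<lambda>s. (1 / weight \<tau> s) *\<^sub>R (\<xi> + signed_integral \<tau> (picard_integrand \<tau> u) s)) \<in> bcontfun"
  proof (rule bcontfun_normI)
    show "continuous_on UNIV (\<lambda>s. (1 / weight \<tau> s) *\<^sub>R (\<xi> + signed_integral \<tau> (picard_integrand \<tau> u) s))"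
      using weight_ge_1[of \<tau>]
      by (intro continuous_intros continuous_on_weight continuous_on_signed_integral
          continuous_on_picard_integrand) (auto simp: weight_def)
    fix s
    have "norm (signed_integral \<tau> (picard_integrand \<tau> u) s) \<le> (norm u + 1) * (weight \<tau> s - 1) / 2"
      by (rule norm_signed_integral_le_weight[OF continuous_on_picard_integrand _ norm_picard_integrand_le])
         simp
    moreover have "(norm u + 1) * ((weight \<tau> s - 1) / 2) \<le> (norm u + 1) * weight \<tau> s"
      using weight_ge_1[of \<tau> s] by (intro mult_left_mono) auto
    moreover have "norm \<xi> * 1 \<le> norm \<xi> * weight \<tau> s"
      using weight_ge_1[of \<tau> s] by (intro mult_left_mono) auto
    ultimately have "norm (\<xi> + signed_integral \<tau> (picard_integrand \<tau> u) s)
        \<le> (norm \<xi> + norm u + 1) * weight \<tau> s"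
      using norm_triangle_ineq[of \<xi> "signed_integral \<tau> (picard_integrand \<tau> u) s"]
      by (simp add: distrib_right)
    then show "norm ((1 / weight \<tau> s) *\<^sub>R (\<xi> + signed_integral \<tau> (picard_integrand \<tau> u) s))
        \<le> norm \<xi> + norm u + 1"
      using weight_ge_1[of \<tau> s] by (simp add: divide_le_eq mult.commute)
  qed
  then show ?thesis by (simp add: picard_def Bcontfun_inverse)
qed

lemma picard_contraction: "dist (picard \<tau> \<xi> u) (picard \<tau> \<xi> v) \<le> 1 / 2 * dist u v"
proof (rule dist_bound)
  fix s
  have "norm (signed_integral \<tau> (\<lambda>\<sigma>. picard_integrand \<tau> u \<sigma> - picard_integrand \<tau> v \<sigma>) s)
      \<le> dist u v * (weight \<tau> s - 1) / 2"
    by (intro norm_signed_integral_le_weight continuous_on_diff continuous_on_picard_integrand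
        norm_picard_integrand_diff_le zero_le_dist)
  then have "norm (signed_integral \<tau> (picard_integrand \<tau> u) s - signed_integral \<tau> (picard_integrand \<tau> v) s)
      \<le> weight \<tau> s * (dist u v / 2)"
    by (simp add: signed_integral_diff_fun continuous_on_picard_integrand right_diff_distrib
        diff_divide_distrib mult.commute) (use zero_le_dist[of u v] in linarith)
  then show "dist (picard \<tau> \<xi> u s) (picard \<tau> \<xi> v s) \<le> 1 / 2 * dist u v"
    using weight_ge_1[of \<tau> s]
    by (simp add: picard_apply dist_norm scaleR_diff_right[symmetric] divide_le_eq mult.commute)
qed

theorem solution_exists: "\<exists>x. x \<tau> = \<xi> \<and> (\<forall>t. (x has_vector_derivative F t (x t)) (at t))"
proof -
  obtain u where u: "picard \<tau> \<xi> u = u"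
    using banach_fix_type[of "1/2" "picard \<tau> \<xi>"] picard_contraction by auto
  define x where "x s = weight \<tau> s *\<^sub>R u s" for s
  have x_eq: "x = (\<lambda>s. \<xi> + signed_integral \<tau> (\<lambda>\<sigma>. F \<sigma> (x \<sigma>)) s)"
  proof
    fix s
    show "x s = \<xi> + signed_integral \<tau> (\<lambda>\<sigma>. F \<sigma> (x \<sigma>)) s"
      using picard_apply[of \<tau> \<xi> u s] weight_ge_1[of \<tau> s]
      by (simp add: x_def u picard_integrand_def[abs_def])
  qed
  have "continuous_on UNIV (\<lambda>\<sigma>. F \<sigma> (x \<sigma>))"
    using continuous_on_picard_integrand[of \<tau> u] by (simp add: picard_integrand_def[abs_def] x_def)
  then have "(x has_vector_derivative 0 + F t (x t)) (at t)" for t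
    by (subst x_eq) (intro has_vector_derivative_add has_vector_derivative_const
        signed_integral_has_vector_derivative)
  moreover have "x \<tau> = \<xi>"
    by (subst x_eq) simp
  ultimately show ?thesis by auto
qed

theorem unique_solution: "\<exists>!x. x \<tau> = \<xi> \<and> (\<forall>t. (x has_vector_derivative F t (x t)) (at t))"
proof (rule ex_ex1I)
  show "\<exists>x. x \<tau> = \<xi> \<and> (\<forall>t. (x has_vector_derivative F t (x t)) (at t))"
    by (rule solution_exists)
  fix x y
  assume x: "x \<tau> = \<xi> \<and> (\<forall>t. (x has_vector_derivative F t (x t)) (at t))"
    and y: "y \<tau> = \<xi> \<and> (\<forall>t. (y has_vector_derivative F t (y t)) (at t))"
  show "x = y"
  proof
    fix t
    show "x t = y t"
      by (rule ode_solutions_eq[where \<tau> = \<tau>, OF _ _ F_lipschitz \<psi>_deriv]) (use x y in simp_all)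
  qed
qed

end

section \<open>Linear evolution operators\<close>

locale linear_evolution =
  fixes A :: "real \<Rightarrow> real^'n^'n" and T :: "real \<Rightarrow> real \<Rightarrow> real^'n^'n"
  assumes A_bdd: "bounded (range A)"
    and T_init: "\<And>s. T s s = mat 1"
    and T_deriv: "\<And>t s. ((\<lambda>u. T u s) has_vector_derivative (A t ** T t s)) (at t)"
begin

lemma A_bound:
  obtains a where "a \<ge> 0" "\<And>t x. norm (A t *v x) \<le> a * norm x"
proof -
  obtain B where B: "\<And>t. norm (A t) \<le> B"
    using A_bdd by (auto simp: bounded_iff)
  have "\<bar>A t $ i $ j\<bar> \<le> max B 0" for t i j
  proof -
    have "\<bar>A t $ i $ j\<bar> \<le> norm (A t $ i)" by (rule component_le_norm_cart)
    also have "\<dots> \<le> norm (A t)" by (rule Finite_Cartesian_Product.norm_nth_le)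
    also have "\<dots> \<le> max B 0" using B[of t] by simp
    finally show ?thesis .
  qed
  then have "onorm ((*v) (A t)) \<le> real CARD('n) * real CARD('n) * max B 0" for t
    by (rule onorm_le_matrix_component)
  then have "norm (A t *v x) \<le> (real CARD('n) * real CARD('n) * max B 0) * norm x" for t x
    using onorm[OF matrix_vector_mul_bounded_linear, of "A t" x] mult_right_mono[OF _ norm_ge_zero]
    by (meson order_trans)
  then show thesis
    by (intro that[of "real CARD('n) * real CARD('n) * max B 0"]) auto
qed

lemma T_apply_has_vector_derivative:
  "((\<lambda>t. T t s *v x) has_vector_derivative A t *v (T t s *v x)) (at t)"
  using bounded_bilinear.has_vector_derivative[OF bounded_bilinear_matrix_vector_mult T_deriv
      has_vector_derivative_const[of x]]
  by (simp add: matrix_vector_mul_assoc)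

lemma linear_solutions_eq:
  assumes x: "\<And>t. (x has_vector_derivative A t *v x t) (at t)"
    and y: "\<And>t. (y has_vector_derivative A t *v y t) (at t)"
    and "x \<tau> = y \<tau>"
  shows "x t = y t"
proof -
  obtain a where "a \<ge> 0" "\<And>t x. norm (A t *v x) \<le> a * norm x"
    using A_bound by metis
  then have "norm (A t *v u - A t *v v) \<le> a * norm (u - v)" for t u v
    by (metis matrix_vector_mult_diff_distrib)
  moreover have "((\<lambda>t. a * t) has_real_derivative a) (at t)" for t
    using DERIV_cmult_Id[of a t] by (simp add: o_def)
  ultimately show ?thesis
    using ode_solutions_eq[where F = "\<lambda>t v. A t *v v" and L = "\<lambda>_. a", OF x y] \<open>x \<tau> = y \<tau>\<close>
    by blast
qed

lemma T_cocycle: "T t s *v (T s r *v x) = T t r *v x"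
  by (rule linear_solutions_eq[OF T_apply_has_vector_derivative T_apply_has_vector_derivative, of s])
     (simp add: T_init)

lemma T_inverse: "T s r *v (T r s *v x) = x"
  by (simp add: T_cocycle T_init)

lemma norm_T_apply_le:
  obtains a where "a \<ge> 0" "\<And>t s x. norm (T t s *v x) \<le> exp (a * \<bar>t - s\<bar>) * norm x"
proof -
  obtain a where a: "a \<ge> 0" "\<And>t x. norm (A t *v x) \<le> a * norm x"
    using A_bound by metis
  have "norm (T t s *v x) \<le> exp (a * \<bar>t - s\<bar>) * norm x" for t s x
  proof -
    have a': "((\<lambda>t. a * t) has_real_derivative a) (at t)" for t
      using DERIV_cmult_Id[of a t] by (simp add: o_def)
    note bounds = gronwall_norm_bounds[where w = "\<lambda>t. T t s *v x",
        OF _ T_apply_has_vector_derivative a' a(2)]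
    show ?thesis
      using bounds(1)[of s t] bounds(2)[of t s] by (cases "s \<le> t") (simp_all add: T_init algebra_simps)
  qed
  with a(1) show thesis by (rule that)
qed

lemma continuous_on_T: "continuous_on UNIV (\<lambda>t. T t s)"
  using T_deriv by (rule continuous_on_if_has_vector_derivative)

lemma continuous_on_T_apply: "continuous_on UNIV (\<lambda>t. T t s *v x)"
  using T_apply_has_vector_derivative by (rule continuous_on_if_has_vector_derivative)

text \<open>Continuity in the initial time is not part of the hypotheses; it follows from
  \<open>T \<sigma>\<^sub>0 \<sigma> y(\<sigma>) - y(\<sigma>\<^sub>0) = T \<sigma>\<^sub>0 \<sigma> (y(\<sigma>) - T \<sigma> \<sigma>\<^sub>0 y(\<sigma>\<^sub>0))\<close> and the exponential bound on \<open>T\<close>.\<close>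

lemma continuous_on_T_apply_initial:
  assumes y: "continuous_on UNIV y"
  shows "continuous_on UNIV (\<lambda>\<sigma>. T t \<sigma> *v y \<sigma>)"
proof -
  obtain a where "a \<ge> 0" and a: "\<And>t s x. norm (T t s *v x) \<le> exp (a * \<bar>t - s\<bar>) * norm x"
    using norm_T_apply_le by metis
  have "isCont (\<lambda>\<sigma>. T \<sigma>\<^sub>0 \<sigma> *v y \<sigma>) \<sigma>\<^sub>0" for \<sigma>\<^sub>0
  proof -
    let ?e = "\<lambda>\<sigma>. y \<sigma> - T \<sigma> \<sigma>\<^sub>0 *v y \<sigma>\<^sub>0"
    have "(?e \<longlongrightarrow> y \<sigma>\<^sub>0 - T \<sigma>\<^sub>0 \<sigma>\<^sub>0 *v y \<sigma>\<^sub>0) (at \<sigma>\<^sub>0)"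
      using y continuous_on_T_apply[of \<sigma>\<^sub>0 "y \<sigma>\<^sub>0"]
      by (intro tendsto_diff) (simp_all add: continuous_on_eq_continuous_at isCont_def)
    then have "((\<lambda>\<sigma>. norm (?e \<sigma>)) \<longlongrightarrow> 0) (at \<sigma>\<^sub>0)"
      by (simp add: T_init tendsto_norm_zero)
    moreover have "((\<lambda>\<sigma>. exp (a * \<bar>\<sigma>\<^sub>0 - \<sigma>\<bar>)) \<longlongrightarrow> exp (a * \<bar>\<sigma>\<^sub>0 - \<sigma>\<^sub>0\<bar>)) (at \<sigma>\<^sub>0)"
      by (intro tendsto_intros)
    ultimately have e: "((\<lambda>\<sigma>. exp (a * \<bar>\<sigma>\<^sub>0 - \<sigma>\<bar>) * norm (?e \<sigma>)) \<longlongrightarrow> 0) (at \<sigma>\<^sub>0)"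
      using tendsto_mult by fastforce
    have le: "norm (T \<sigma>\<^sub>0 \<sigma> *v y \<sigma> - y \<sigma>\<^sub>0) \<le> exp (a * \<bar>\<sigma>\<^sub>0 - \<sigma>\<bar>) * norm (?e \<sigma>)" for \<sigma>
      using a[of \<sigma>\<^sub>0 \<sigma> "?e \<sigma>"] by (simp add: matrix_vector_mult_diff_distrib T_inverse)
    have "((\<lambda>\<sigma>. T \<sigma>\<^sub>0 \<sigma> *v y \<sigma> - y \<sigma>\<^sub>0) \<longlongrightarrow> 0) (at \<sigma>\<^sub>0)"
      by (rule Lim_null_comparison[OF always_eventually e]) (use le in blast)
    then show ?thesis
      by (simp add: isCont_def LIM_zero_iff T_init)
  qed
  then have "isCont (\<lambda>\<sigma>. T t \<sigma>\<^sub>0 *v (T \<sigma>\<^sub>0 \<sigma> *v y \<sigma>)) \<sigma>\<^sub>0" for \<sigma>\<^sub>0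
    by (rule isCont_o2[OF _ matrix_vector_mult_linear_continuous_at])
  then show ?thesis
    by (simp add: continuous_on_eq_continuous_at T_cocycle)
qed

lemma T_apply_integral:
  assumes G: "continuous_on UNIV G"
  shows "T s r *v integral {a..b} (\<lambda>\<sigma>. T r \<sigma> *v G \<sigma>) = integral {a..b} (\<lambda>\<sigma>. T s \<sigma> *v G \<sigma>)"
proof -
  have "(\<lambda>\<sigma>. T r \<sigma> *v G \<sigma>) integrable_on {a..b}"
    by (rule integrable_on_interval_if_continuous[OF continuous_on_T_apply_initial[OF G]])
  from integral_linear[OF this matrix_vector_mul_bounded_linear[of "T s r"]] show ?thesis
    by (simp add: o_def T_cocycle)
qed

lemma variation_of_constants:
  assumes F: "continuous_on UNIV F"
    and z: "\<And>u. (z has_vector_derivative A u *v z u + F u) (at u)"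
  shows "z s = T s r *v z r + signed_integral r (\<lambda>\<sigma>. T s \<sigma> *v F \<sigma>) s"
proof -
  define g where "g \<sigma> = T 0 \<sigma> *v F \<sigma>" for \<sigma>
  have g: "continuous_on UNIV g"
    unfolding g_def by (rule continuous_on_T_apply_initial[OF F])
  define y where "y u = T u r *v z r + T u 0 *v signed_integral r g u" for u
  have y: "(y has_vector_derivative A u *v y u + F u) (at u)" for u
  proof -
    have "(y has_vector_derivative
        A u *v (T u r *v z r) + (T u 0 *v g u + (A u ** T u 0) *v signed_integral r g u)) (at u)"
      unfolding y_def
      by (intro has_vector_derivative_add T_apply_has_vector_derivative
          bounded_bilinear.has_vector_derivative[OF bounded_bilinear_matrix_vector_mult T_deriv
            signed_integral_has_vector_derivative[OF g]])
    then show ?thesis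
      by (simp add: y_def g_def T_inverse matrix_vector_right_distrib matrix_vector_mul_assoc[symmetric]
          algebra_simps)
  qed
  have "(\<lambda>u. z u - y u) s = 0"
  proof (rule linear_solutions_eq[of _ "\<lambda>_. 0" r])
    fix u show "((\<lambda>u. z u - y u) has_vector_derivative A u *v (z u - y u)) (at u)"
      using has_vector_derivative_diff[OF z y] by (simp add: matrix_vector_mult_diff_distrib)
  qed (simp_all add: y_def T_init)
  then have "z s = T s r *v z r + T s 0 *v signed_integral r g s"
    by (simp add: y_def)
  also have "T s 0 *v signed_integral r g s = signed_integral r (\<lambda>\<sigma>. T s 0 *v g \<sigma>) s"
    by (rule signed_integral_linear[OF g matrix_vector_mul_bounded_linear])
  finally show ?thesis
    by (simp add: g_def T_cocycle)
qed

end

section \<open>Algebraic dichotomies\<close>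

locale algebraic_dichotomy = linear_evolution A T
  for A :: "real \<Rightarrow> real^'n^'n" and T +
  fixes \<mu> :: "real \<Rightarrow> real" and P :: "real \<Rightarrow> real^'n^'n" and K \<alpha> :: real
  assumes mu_pos: "\<And>t. \<mu> t > 0"
    and mu_mono: "mono \<mu>"
    and mu_diff: "\<And>t. \<mu> differentiable (at t)"
    and mu_bot: "(\<mu> \<longlongrightarrow> 0) at_bot"
    and mu_top: "filterlim \<mu> at_top at_top"
    and K_pos: "K > 0" and alpha_pos: "\<alpha> > 0"
    and TP_comm: "\<And>t s. T t s ** P s = P t ** T t s"
    and dich_P: "\<And>t s. t \<ge> s \<Longrightarrow> opnorm (T t s ** P s) \<le> K * (\<mu> t / \<mu> s) powr (-\<alpha>)"
    and dich_Q: "\<And>t s. t \<le> s \<Longrightarrow> opnorm (T t s ** (mat 1 - P s)) \<le> K * (\<mu> s / \<mu> t) powr (-\<alpha>)"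
begin

lemma mu_has_derivative: "(\<mu> has_real_derivative deriv \<mu> t) (at t)"
  using DERIV_deriv_iff_real_differentiable[THEN iffD2, OF mu_diff] .

lemma deriv_mu_nonneg: "deriv \<mu> t \<ge> 0"
proof (rule ccontr)
  assume "\<not> deriv \<mu> t \<ge> 0"
  then obtain d where "d > 0" and d: "\<And>h. 0 < h \<Longrightarrow> h < d \<Longrightarrow> \<mu> (t + h) < \<mu> t"
    using DERIV_neg_dec_right[OF mu_has_derivative, of t] by auto
  have "\<mu> t \<le> \<mu> (t + d / 2)"
    using mu_mono \<open>d > 0\<close> by (simp add: monoD)
  with d[of "d / 2"] \<open>d > 0\<close> show False by simp
qed

lemma deriv_mu_div_nonneg: "deriv \<mu> t / \<mu> t \<ge> 0"
  using deriv_mu_nonneg mu_pos[of t] by simp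

lemma mu_ratio_powr: "(\<mu> a / \<mu> b) powr e = exp (e * (ln (\<mu> a) - ln (\<mu> b)))"
  using mu_pos[of a] mu_pos[of b] by (simp add: powr_def ln_div)

lemma mu_ratio_powr_tendsto_at_bot: "((\<lambda>r. (\<mu> r / \<mu> s) powr \<alpha>) \<longlongrightarrow> 0) at_bot"
proof -
  have "((\<lambda>r. \<mu> r / \<mu> s) \<longlongrightarrow> 0 / \<mu> s) at_bot"
    by (intro tendsto_divide mu_bot tendsto_const) (use mu_pos[of s] in simp)
  then show ?thesis
    by (intro tendsto_zero_powrI[where b = \<alpha>])
       (use alpha_pos mu_pos in \<open>auto intro!: always_eventually less_imp_le\<close>)
qed

lemma mu_ratio_powr_tendsto_at_top: "((\<lambda>r. (\<mu> s / \<mu> r) powr \<alpha>) \<longlongrightarrow> 0) at_top"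
proof -
  have "((\<lambda>r. \<mu> s / \<mu> r) \<longlongrightarrow> 0) at_top"
    by (rule tendsto_divide_0[OF tendsto_const filterlim_at_top_imp_at_infinity[OF mu_top]])
  then show ?thesis
    by (intro tendsto_zero_powrI[where b = \<alpha>])
       (use alpha_pos mu_pos in \<open>auto intro!: always_eventually less_imp_le\<close>)
qed

lemma T_P_commute: "T t s *v (P s *v x) = P t *v (T t s *v x)"
  by (metis TP_comm matrix_vector_mul_assoc)

lemma mu_ratio_powr_minus: "(\<mu> a / \<mu> b) powr (- \<alpha>) = (\<mu> b / \<mu> a) powr \<alpha>"
  by (simp add: mu_ratio_powr algebra_simps)

lemma norm_T_P_le:
  assumes "s \<le> t"
  shows "norm (T t s *v (P s *v x)) \<le> K * (\<mu> s / \<mu> t) powr \<alpha> * norm x"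
proof -
  have "norm (T t s *v (P s *v x)) \<le> opnorm (T t s ** P s) * norm x"
    using norm_matrix_vector_le_opnorm[of "T t s ** P s" x] by (simp add: matrix_vector_mul_assoc)
  also have "\<dots> \<le> K * (\<mu> s / \<mu> t) powr \<alpha> * norm x"
    using dich_P[OF assms] by (intro mult_right_mono) (simp_all add: mu_ratio_powr_minus)
  finally show ?thesis .
qed

lemma norm_T_Q_le:
  assumes "t \<le> s"
  shows "norm (T t s *v (x - P s *v x)) \<le> K * (\<mu> t / \<mu> s) powr \<alpha> * norm x"
proof -
  have "norm (T t s *v (x - P s *v x)) \<le> opnorm (T t s ** (mat 1 - P s)) * norm x"
    using norm_matrix_vector_le_opnorm[of "T t s ** (mat 1 - P s)" x]
    by (simp add: matrix_vector_mul_assoc[symmetric] matrix_vector_mult_diff_rdistrib)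
  also have "\<dots> \<le> K * (\<mu> t / \<mu> s) powr \<alpha> * norm x"
    using dich_Q[OF assms] by (intro mult_right_mono) (simp_all add: mu_ratio_powr_minus)
  finally show ?thesis .
qed

lemma continuous_on_P_apply:
  assumes F: "continuous_on UNIV F"
  shows "continuous_on UNIV (\<lambda>\<sigma>. P \<sigma> *v F \<sigma>)"
proof -
  have "continuous_on UNIV (\<lambda>\<sigma>. T \<sigma> 0 *v (P 0 *v (T 0 \<sigma> *v F \<sigma>)))"
    by (intro bounded_bilinear.continuous_on[OF bounded_bilinear_matrix_vector_mult continuous_on_T]
        continuous_on_compose2[OF matrix_vector_mult_linear_continuous_on continuous_on_T_apply_initial[OF F]])
       auto
  then show ?thesis
    by (simp add: T_P_commute T_inverse)
qed

lemma continuous_on_T_P_apply: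
  "continuous_on UNIV F \<Longrightarrow> continuous_on UNIV (\<lambda>\<sigma>. T s \<sigma> *v (P \<sigma> *v F \<sigma>))"
  by (intro continuous_on_T_apply_initial continuous_on_P_apply)

lemma continuous_on_T_Q_apply:
  "continuous_on UNIV F \<Longrightarrow> continuous_on UNIV (\<lambda>\<sigma>. T s \<sigma> *v (F \<sigma> - P \<sigma> *v F \<sigma>))"
  by (intro continuous_on_T_apply_initial continuous_on_diff continuous_on_P_apply)

lemma norm_integral_T_P_le:
  assumes F: "continuous_on UNIV F" and F_le: "\<And>\<sigma>. norm (F \<sigma>) \<le> c * deriv \<mu> \<sigma> / \<mu> \<sigma>"
    and "r \<le> r'" "r' \<le> s"
  shows "norm (integral {r..r'} (\<lambda>\<sigma>. T s \<sigma> *v (P \<sigma> *v F \<sigma>)))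
     \<le> K * c / \<alpha> * ((\<mu> r' / \<mu> s) powr \<alpha> - (\<mu> r / \<mu> s) powr \<alpha>)"
proof -
  have "norm (integral {r..r'} (\<lambda>\<sigma>. T s \<sigma> *v (P \<sigma> *v F \<sigma>)))
      \<le> K * c / \<alpha> * exp (\<alpha> * (ln (\<mu> r') - ln (\<mu> s))) - K * c / \<alpha> * exp (\<alpha> * (ln (\<mu> r) - ln (\<mu> s)))"
  proof (rule norm_integral_le_antiderivative_diff[OF \<open>r \<le> r'\<close> continuous_on_T_P_apply[OF F]])
    fix \<sigma> assume \<sigma>: "\<sigma> \<in> {r..r'}"
    show "((\<lambda>\<sigma>. K * c / \<alpha> * exp (\<alpha> * (ln (\<mu> \<sigma>) - ln (\<mu> s)))) has_real_derivative
        K * (\<mu> \<sigma> / \<mu> s) powr \<alpha> * (c * deriv \<mu> \<sigma> / \<mu> \<sigma>)) (at \<sigma>)"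
      using alpha_pos
      by (auto intro!: derivative_eq_intros mu_has_derivative mu_pos simp: mu_ratio_powr field_simps)
    have "norm (T s \<sigma> *v (P \<sigma> *v F \<sigma>)) \<le> K * (\<mu> \<sigma> / \<mu> s) powr \<alpha> * norm (F \<sigma>)"
      using \<sigma> \<open>r' \<le> s\<close> by (intro norm_T_P_le) auto
    also have "\<dots> \<le> K * (\<mu> \<sigma> / \<mu> s) powr \<alpha> * (c * deriv \<mu> \<sigma> / \<mu> \<sigma>)"
      using K_pos by (intro mult_left_mono F_le) auto
    finally show "norm (T s \<sigma> *v (P \<sigma> *v F \<sigma>)) \<le> K * (\<mu> \<sigma> / \<mu> s) powr \<alpha> * (c * deriv \<mu> \<sigma> / \<mu> \<sigma>)" .
  qed
  then show ?thesis
    by (simp add: mu_ratio_powr right_diff_distrib)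
qed

lemma norm_integral_T_Q_le:
  assumes F: "continuous_on UNIV F" and F_le: "\<And>\<sigma>. norm (F \<sigma>) \<le> c * deriv \<mu> \<sigma> / \<mu> \<sigma>"
    and "r' \<le> r" "s \<le> r'"
  shows "norm (integral {r'..r} (\<lambda>\<sigma>. T s \<sigma> *v (F \<sigma> - P \<sigma> *v F \<sigma>)))
     \<le> K * c / \<alpha> * ((\<mu> s / \<mu> r') powr \<alpha> - (\<mu> s / \<mu> r) powr \<alpha>)"
proof -
  have "norm (integral {r'..r} (\<lambda>\<sigma>. T s \<sigma> *v (F \<sigma> - P \<sigma> *v F \<sigma>)))
      \<le> - (K * c / \<alpha> * exp (\<alpha> * (ln (\<mu> s) - ln (\<mu> r)))) - - (K * c / \<alpha> * exp (\<alpha> * (ln (\<mu> s) - ln (\<mu> r'))))"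
  proof (rule norm_integral_le_antiderivative_diff[OF \<open>r' \<le> r\<close> continuous_on_T_Q_apply[OF F]])
    fix \<sigma> assume \<sigma>: "\<sigma> \<in> {r'..r}"
    show "((\<lambda>\<sigma>. - (K * c / \<alpha> * exp (\<alpha> * (ln (\<mu> s) - ln (\<mu> \<sigma>))))) has_real_derivative
        K * (\<mu> s / \<mu> \<sigma>) powr \<alpha> * (c * deriv \<mu> \<sigma> / \<mu> \<sigma>)) (at \<sigma>)"
      using alpha_pos
      by (auto intro!: derivative_eq_intros mu_has_derivative mu_pos simp: mu_ratio_powr field_simps)
    have "norm (T s \<sigma> *v (F \<sigma> - P \<sigma> *v F \<sigma>)) \<le> K * (\<mu> s / \<mu> \<sigma>) powr \<alpha> * norm (F \<sigma>)"
      using \<sigma> \<open>s \<le> r'\<close> by (intro norm_T_Q_le) auto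
    also have "\<dots> \<le> K * (\<mu> s / \<mu> \<sigma>) powr \<alpha> * (c * deriv \<mu> \<sigma> / \<mu> \<sigma>)"
      using K_pos by (intro mult_left_mono F_le) auto
    finally show "norm (T s \<sigma> *v (F \<sigma> - P \<sigma> *v F \<sigma>)) \<le> K * (\<mu> s / \<mu> \<sigma>) powr \<alpha> * (c * deriv \<mu> \<sigma> / \<mu> \<sigma>)" .
  qed
  then show ?thesis
    by (simp add: mu_ratio_powr right_diff_distrib)
qed

lemma projected_variation_of_constants:
  assumes F: "continuous_on UNIV F"
    and d: "\<And>u. (d has_vector_derivative A u *v d u + F u) (at u)"
  shows "P s *v d s = T s r *v (P r *v d r) + signed_integral r (\<lambda>\<sigma>. T s \<sigma> *v (P \<sigma> *v F \<sigma>)) s"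
    and "d s - P s *v d s
      = T s r *v (d r - P r *v d r) + signed_integral r (\<lambda>\<sigma>. T s \<sigma> *v (F \<sigma> - P \<sigma> *v F \<sigma>)) s"
proof -
  have TF: "continuous_on UNIV (\<lambda>\<sigma>. T s \<sigma> *v F \<sigma>)"
    by (rule continuous_on_T_apply_initial[OF F])
  note vc = variation_of_constants[OF F d, of s r]
  have "P s *v signed_integral r (\<lambda>\<sigma>. T s \<sigma> *v F \<sigma>) s
      = signed_integral r (\<lambda>\<sigma>. T s \<sigma> *v (P \<sigma> *v F \<sigma>)) s"
    using signed_integral_linear[OF TF matrix_vector_mul_bounded_linear, of "P s" r s]
    by (simp add: T_P_commute)
  then show P: "P s *v d s = T s r *v (P r *v d r) + signed_integral r (\<lambda>\<sigma>. T s \<sigma> *v (P \<sigma> *v F \<sigma>)) s"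
    by (subst vc) (simp add: matrix_vector_right_distrib T_P_commute)
  have "signed_integral r (\<lambda>\<sigma>. T s \<sigma> *v (F \<sigma> - P \<sigma> *v F \<sigma>)) s
      = signed_integral r (\<lambda>\<sigma>. T s \<sigma> *v F \<sigma>) s - signed_integral r (\<lambda>\<sigma>. T s \<sigma> *v (P \<sigma> *v F \<sigma>)) s"
    using signed_integral_diff_fun[OF TF continuous_on_T_P_apply[OF F]]
    by (simp add: matrix_vector_mult_diff_distrib)
  then show "d s - P s *v d s
      = T s r *v (d r - P r *v d r) + signed_integral r (\<lambda>\<sigma>. T s \<sigma> *v (F \<sigma> - P \<sigma> *v F \<sigma>)) s"
    by (subst P, subst vc) (simp add: matrix_vector_mult_diff_distrib)
qed


lemma norm_P_bounded_solution_le: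
  assumes F: "continuous_on UNIV F"
    and d: "\<And>u. (d has_vector_derivative A u *v d u + F u) (at u)"
    and F_le: "\<And>\<sigma>. norm (F \<sigma>) \<le> b * deriv \<mu> \<sigma> / \<mu> \<sigma>" and "b \<ge> 0"
    and B: "\<And>s. norm (d s) \<le> B"
  shows "norm (P s *v d s) \<le> K * b / \<alpha>"
proof (rule le_if_eventually_le_tendsto_zero[OF trivial_limit_at_bot_linorder])
  show "((\<lambda>r. K * B * (\<mu> r / \<mu> s) powr \<alpha>) \<longlongrightarrow> 0) at_bot"
    using tendsto_mult_right_zero[OF mu_ratio_powr_tendsto_at_bot, of "K * B" s] by simp
  show "\<forall>\<^sub>F r in at_bot. norm (P s *v d s) \<le> K * B * (\<mu> r / \<mu> s) powr \<alpha> + K * b / \<alpha>"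
    using eventually_le_at_bot[of s]
  proof (rule eventually_mono)
    fix r assume "r \<le> s"
    have "norm (P s *v d s)
        \<le> norm (T s r *v (P r *v d r)) + norm (integral {r..s} (\<lambda>\<sigma>. T s \<sigma> *v (P \<sigma> *v F \<sigma>)))"
      using projected_variation_of_constants(1)[OF F d, of s r]
      by (simp add: signed_integral_forward[OF \<open>r \<le> s\<close>] norm_triangle_ineq)
    also have "\<dots> \<le> K * (\<mu> r / \<mu> s) powr \<alpha> * B + K * b / \<alpha> * ((\<mu> s / \<mu> s) powr \<alpha> - (\<mu> r / \<mu> s) powr \<alpha>)"
      by (intro add_mono order_trans[OF norm_T_P_le[OF \<open>r \<le> s\<close>] mult_left_mono[OF B]]
          norm_integral_T_P_le[OF F F_le \<open>r \<le> s\<close> order_refl]) (use K_pos in auto)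
    also have "\<dots> \<le> K * B * (\<mu> r / \<mu> s) powr \<alpha> + K * b / \<alpha>"
      using mu_pos[of s] K_pos alpha_pos \<open>b \<ge> 0\<close> by (simp add: algebra_simps)
    finally show "norm (P s *v d s) \<le> K * B * (\<mu> r / \<mu> s) powr \<alpha> + K * b / \<alpha>" .
  qed
qed

lemma norm_Q_bounded_solution_le:
  assumes F: "continuous_on UNIV F"
    and d: "\<And>u. (d has_vector_derivative A u *v d u + F u) (at u)"
    and F_le: "\<And>\<sigma>. norm (F \<sigma>) \<le> b * deriv \<mu> \<sigma> / \<mu> \<sigma>" and "b \<ge> 0"
    and B: "\<And>s. norm (d s) \<le> B"
  shows "norm (d s - P s *v d s) \<le> K * b / \<alpha>"
proof (rule le_if_eventually_le_tendsto_zero[OF trivial_limit_at_top_linorder])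
  show "((\<lambda>r. K * B * (\<mu> s / \<mu> r) powr \<alpha>) \<longlongrightarrow> 0) at_top"
    using tendsto_mult_right_zero[OF mu_ratio_powr_tendsto_at_top, of "K * B" s] by simp
  show "\<forall>\<^sub>F r in at_top. norm (d s - P s *v d s) \<le> K * B * (\<mu> s / \<mu> r) powr \<alpha> + K * b / \<alpha>"
    using eventually_ge_at_top[of s]
  proof (rule eventually_mono)
    fix r assume "s \<le> r"
    have "norm (d s - P s *v d s)
        \<le> norm (T s r *v (d r - P r *v d r)) + norm (integral {s..r} (\<lambda>\<sigma>. T s \<sigma> *v (F \<sigma> - P \<sigma> *v F \<sigma>)))"
      using projected_variation_of_constants(2)[OF F d, of s r]
      by (simp add: signed_integral_backward[OF \<open>s \<le> r\<close>] norm_triangle_ineq4)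
    also have "\<dots> \<le> K * (\<mu> s / \<mu> r) powr \<alpha> * B + K * b / \<alpha> * ((\<mu> s / \<mu> s) powr \<alpha> - (\<mu> s / \<mu> r) powr \<alpha>)"
      by (intro add_mono order_trans[OF norm_T_Q_le[OF \<open>s \<le> r\<close>] mult_left_mono[OF B]]
          norm_integral_T_Q_le[OF F F_le \<open>s \<le> r\<close> order_refl]) (use K_pos in auto)
    also have "\<dots> \<le> K * B * (\<mu> s / \<mu> r) powr \<alpha> + K * b / \<alpha>"
      using mu_pos[of s] K_pos alpha_pos \<open>b \<ge> 0\<close> by (simp add: algebra_simps)
    finally show "norm (d s - P s *v d s) \<le> K * B * (\<mu> s / \<mu> r) powr \<alpha> + K * b / \<alpha>" .
  qed
qed

lemma bounded_solution_norm_le: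
  assumes F: "continuous_on UNIV F"
    and d: "\<And>u. (d has_vector_derivative A u *v d u + F u) (at u)"
    and F_le: "\<And>\<sigma>. norm (F \<sigma>) \<le> c * deriv \<mu> \<sigma> / \<mu> \<sigma> * norm (d \<sigma>)" and "c \<ge> 0"
    and B: "\<And>s. norm (d s) \<le> B"
  shows "norm (d s) \<le> 2 * K * c / \<alpha> * B"
proof -
  have "B \<ge> 0" using B[of s] norm_ge_zero[of "d s"] by linarith
  have F_le': "norm (F \<sigma>) \<le> (c * B) * deriv \<mu> \<sigma> / \<mu> \<sigma>" for \<sigma>
  proof -
    have "c * deriv \<mu> \<sigma> / \<mu> \<sigma> * norm (d \<sigma>) \<le> c * deriv \<mu> \<sigma> / \<mu> \<sigma> * B"
      using mult_nonneg_nonneg[OF \<open>c \<ge> 0\<close> deriv_mu_div_nonneg[of \<sigma>]] by (intro mult_left_mono B) simp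
    then show ?thesis using F_le[of \<sigma>] by (simp add: algebra_simps)
  qed
  have "c * B \<ge> 0" using \<open>c \<ge> 0\<close> \<open>B \<ge> 0\<close> by simp
  have "norm (d s) \<le> norm (P s *v d s) + norm (d s - P s *v d s)"
    using norm_triangle_ineq[of "P s *v d s" "d s - P s *v d s"] by simp
  also have "\<dots> \<le> K * (c * B) / \<alpha> + K * (c * B) / \<alpha>"
    by (intro add_mono norm_P_bounded_solution_le[OF F d F_le' \<open>c * B \<ge> 0\<close> B]
        norm_Q_bounded_solution_le[OF F d F_le' \<open>c * B \<ge> 0\<close> B])
  finally show ?thesis
    by (simp add: field_simps)
qed

lemma bounded_solution_eq_0:
  assumes "bounded (range d)" and F: "continuous_on UNIV F"
    and d: "\<And>u. (d has_vector_derivative A u *v d u + F u) (at u)"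
    and F_le: "\<And>\<sigma>. norm (F \<sigma>) \<le> c * deriv \<mu> \<sigma> / \<mu> \<sigma> * norm (d \<sigma>)" and "c \<ge> 0"
    and small: "2 * K * c / \<alpha> < 1"
  shows "d s = 0"
proof -
  define \<theta> where "\<theta> = 2 * K * c / \<alpha>"
  have "0 \<le> \<theta>" "\<theta> < 1" using small K_pos alpha_pos \<open>c \<ge> 0\<close> by (auto simp: \<theta>_def)
  obtain B where B: "\<And>s. norm (d s) \<le> B" using \<open>bounded (range d)\<close> by (auto simp: bounded_iff)
  have iter: "norm (d s) \<le> \<theta> ^ n * B" for n s
  proof (induction n arbitrary: s)
    case 0 then show ?case using B by simp
  next
    case (Suc n)
    have "norm (d s) \<le> 2 * K * c / \<alpha> * (\<theta> ^ n * B)"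
      by (rule bounded_solution_norm_le[OF F d F_le \<open>c \<ge> 0\<close> Suc.IH])
    then show ?case by (simp add: \<theta>_def)
  qed
  have "(\<lambda>n. \<theta> ^ n * B) \<longlonglongrightarrow> 0"
    using tendsto_mult_left_zero[OF LIMSEQ_power_zero[of \<theta>]] \<open>0 \<le> \<theta>\<close> \<open>\<theta> < 1\<close> by simp
  then have "norm (d s) \<le> 0"
    by (rule LIMSEQ_le_const) (use iter in auto)
  then show ?thesis by simp
qed


lemma convergent_integral_T_P:
  assumes F: "continuous_on UNIV F" and F_le: "\<And>\<sigma>. norm (F \<sigma>) \<le> b * deriv \<mu> \<sigma> / \<mu> \<sigma>" and "b \<ge> 0"
  shows "convergent (\<lambda>n. integral {- real n..0} (\<lambda>\<sigma>. T 0 \<sigma> *v (P \<sigma> *v F \<sigma>)))"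
proof (rule convergent_if_tail_bound)
  let ?I = "\<lambda>\<sigma>. T 0 \<sigma> *v (P \<sigma> *v F \<sigma>)"
  fix m n :: nat assume "n \<le> m"
  have "integral {- real m..- real n} ?I + integral {- real n..0} ?I = integral {- real m..0} ?I"
    by (rule Henstock_Kurzweil_Integration.integral_combine)
       (use \<open>n \<le> m\<close> integrable_on_interval_if_continuous[OF continuous_on_T_P_apply[OF F]] in auto)
  then have "integral {- real m..0} ?I - integral {- real n..0} ?I = integral {- real m..- real n} ?I"
    by (simp add: algebra_simps)
  then have "norm (integral {- real m..0} ?I - integral {- real n..0} ?I)
      = norm (integral {- real m..- real n} ?I)"
    by simp
  also have "\<dots> \<le> K * b / \<alpha> * ((\<mu> (- real n) / \<mu> 0) powr \<alpha> - (\<mu> (- real m) / \<mu> 0) powr \<alpha>)"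
    by (rule norm_integral_T_P_le[OF F F_le]) (use \<open>n \<le> m\<close> in auto)
  also have "\<dots> \<le> K * b / \<alpha> * (\<mu> (- real n) / \<mu> 0) powr \<alpha>"
    using K_pos alpha_pos \<open>b \<ge> 0\<close> by (intro mult_left_mono) auto
  finally show "norm (integral {- real m..0} ?I - integral {- real n..0} ?I)
      \<le> K * b / \<alpha> * (\<mu> (- real n) / \<mu> 0) powr \<alpha>" .
next
  have "filterlim (\<lambda>n. - real n) at_bot sequentially"
    by (simp add: filterlim_uminus_at_bot filterlim_real_sequentially)
  from tendsto_mult_right_zero[OF filterlim_compose[OF mu_ratio_powr_tendsto_at_bot this]]
  show "(\<lambda>n. K * b / \<alpha> * (\<mu> (- real n) / \<mu> 0) powr \<alpha>) \<longlonglongrightarrow> 0" .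
qed

lemma convergent_integral_T_Q:
  assumes F: "continuous_on UNIV F" and F_le: "\<And>\<sigma>. norm (F \<sigma>) \<le> b * deriv \<mu> \<sigma> / \<mu> \<sigma>" and "b \<ge> 0"
  shows "convergent (\<lambda>n. integral {0..real n} (\<lambda>\<sigma>. T 0 \<sigma> *v (F \<sigma> - P \<sigma> *v F \<sigma>)))"
proof (rule convergent_if_tail_bound)
  let ?J = "\<lambda>\<sigma>. T 0 \<sigma> *v (F \<sigma> - P \<sigma> *v F \<sigma>)"
  fix m n :: nat assume "n \<le> m"
  have "integral {0..real n} ?J + integral {real n..real m} ?J = integral {0..real m} ?J"
    by (rule Henstock_Kurzweil_Integration.integral_combine)
       (use \<open>n \<le> m\<close> integrable_on_interval_if_continuous[OF continuous_on_T_Q_apply[OF F]] in auto)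
  then have "integral {0..real m} ?J - integral {0..real n} ?J = integral {real n..real m} ?J"
    by (simp add: algebra_simps)
  then have "norm (integral {0..real m} ?J - integral {0..real n} ?J)
      = norm (integral {real n..real m} ?J)"
    by simp
  also have "\<dots> \<le> K * b / \<alpha> * ((\<mu> 0 / \<mu> (real n)) powr \<alpha> - (\<mu> 0 / \<mu> (real m)) powr \<alpha>)"
    by (rule norm_integral_T_Q_le[OF F F_le]) (use \<open>n \<le> m\<close> in auto)
  also have "\<dots> \<le> K * b / \<alpha> * (\<mu> 0 / \<mu> (real n)) powr \<alpha>"
    using K_pos alpha_pos \<open>b \<ge> 0\<close> by (intro mult_left_mono) auto
  finally show "norm (integral {0..real m} ?J - integral {0..real n} ?J)
      \<le> K * b / \<alpha> * (\<mu> 0 / \<mu> (real n)) powr \<alpha>" .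
next
  from tendsto_mult_right_zero[OF
      filterlim_compose[OF mu_ratio_powr_tendsto_at_top filterlim_real_sequentially]]
  show "(\<lambda>n. K * b / \<alpha> * (\<mu> 0 / \<mu> (real n)) powr \<alpha>) \<longlonglongrightarrow> 0" .
qed

lemma truncated_green_eq:
  assumes F: "continuous_on UNIV F" and "r \<le> s" "s \<le> r'" "r \<le> 0" "0 \<le> r'"
  defines "I \<equiv> \<lambda>\<sigma>. T 0 \<sigma> *v (P \<sigma> *v F \<sigma>)" and "J \<equiv> \<lambda>\<sigma>. T 0 \<sigma> *v (F \<sigma> - P \<sigma> *v F \<sigma>)"
  shows "T s 0 *v (integral {r..0} I - integral {0..r'} J + signed_integral 0 I s + signed_integral 0 J s)
    = integral {r..s} (\<lambda>\<sigma>. T s \<sigma> *v (P \<sigma> *v F \<sigma>)) - integral {s..r'} (\<lambda>\<sigma>. T s \<sigma> *v (F \<sigma> - P \<sigma> *v F \<sigma>))"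
proof -
  have I: "continuous_on UNIV I" and J: "continuous_on UNIV J"
    unfolding I_def J_def using F by (rule continuous_on_T_P_apply, rule continuous_on_T_Q_apply)
  have "signed_integral 0 I s - signed_integral 0 I r = integral {r..s} I"
    by (rule signed_integral_diff[OF I \<open>r \<le> s\<close>])
  moreover have "signed_integral 0 J r' - signed_integral 0 J s = integral {s..r'} J"
    by (rule signed_integral_diff[OF J \<open>s \<le> r'\<close>])
  ultimately have "integral {r..0} I - integral {0..r'} J + signed_integral 0 I s + signed_integral 0 J s
      = integral {r..s} I - integral {s..r'} J"
    using \<open>r \<le> 0\<close> \<open>0 \<le> r'\<close> by (simp add: signed_integral_forward signed_integral_backward algebra_simps)
  moreover have "T s 0 *v integral {r..s} I = integral {r..s} (\<lambda>\<sigma>. T s \<sigma> *v (P \<sigma> *v F \<sigma>))"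
    unfolding I_def by (rule T_apply_integral[OF continuous_on_P_apply[OF F]])
  moreover have "T s 0 *v integral {s..r'} J = integral {s..r'} (\<lambda>\<sigma>. T s \<sigma> *v (F \<sigma> - P \<sigma> *v F \<sigma>))"
    unfolding J_def by (rule T_apply_integral[OF continuous_on_diff[OF F continuous_on_P_apply[OF F]]])
  ultimately show ?thesis
    by (simp only: matrix_vector_mult_diff_distrib)
qed

lemma norm_truncated_green_le:
  assumes F: "continuous_on UNIV F" and F_le: "\<And>\<sigma>. norm (F \<sigma>) \<le> b * deriv \<mu> \<sigma> / \<mu> \<sigma>" and "b \<ge> 0"
    and "r \<le> s" "s \<le> r'"
  shows "norm (integral {r..s} (\<lambda>\<sigma>. T s \<sigma> *v (P \<sigma> *v F \<sigma>))
      - integral {s..r'} (\<lambda>\<sigma>. T s \<sigma> *v (F \<sigma> - P \<sigma> *v F \<sigma>))) \<le> 2 * (K * b / \<alpha>)"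
proof -
  have "norm (integral {r..s} (\<lambda>\<sigma>. T s \<sigma> *v (P \<sigma> *v F \<sigma>)))
      \<le> K * b / \<alpha> * ((\<mu> s / \<mu> s) powr \<alpha> - (\<mu> r / \<mu> s) powr \<alpha>)"
    by (rule norm_integral_T_P_le[OF F F_le \<open>r \<le> s\<close> order_refl])
  also have "\<dots> \<le> K * b / \<alpha>"
    using mu_pos[of s] K_pos alpha_pos \<open>b \<ge> 0\<close> by (intro mult_left_le) auto
  finally have "norm (integral {r..s} (\<lambda>\<sigma>. T s \<sigma> *v (P \<sigma> *v F \<sigma>))) \<le> K * b / \<alpha>" .
  moreover have "norm (integral {s..r'} (\<lambda>\<sigma>. T s \<sigma> *v (F \<sigma> - P \<sigma> *v F \<sigma>)))
      \<le> K * b / \<alpha> * ((\<mu> s / \<mu> s) powr \<alpha> - (\<mu> s / \<mu> r') powr \<alpha>)"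
    by (rule norm_integral_T_Q_le[OF F F_le \<open>s \<le> r'\<close> order_refl])
  moreover have "\<dots> \<le> K * b / \<alpha>"
    using mu_pos[of s] K_pos alpha_pos \<open>b \<ge> 0\<close> by (intro mult_left_le) auto
  ultimately show ?thesis
    using norm_triangle_ineq4[of "integral {r..s} (\<lambda>\<sigma>. T s \<sigma> *v (P \<sigma> *v F \<sigma>))"
        "integral {s..r'} (\<lambda>\<sigma>. T s \<sigma> *v (F \<sigma> - P \<sigma> *v F \<sigma>))"]
    by linarith
qed

text \<open>The bounded solution is the Green-function integral
  \<open>h(s) = \<integral>\<^sub>-\<^sub>\<infinity>\<^sup>s T(s,\<sigma>) P(\<sigma>) F(\<sigma>) d\<sigma> - \<integral>\<^sub>s\<^sup>\<infinity> T(s,\<sigma>) Q(\<sigma>) F(\<sigma>) d\<sigma>\<close>,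
  written as \<open>T(s,0)\<close> applied to a solution of the transported equation.\<close>

lemma bounded_solution_exists:
  assumes F: "continuous_on UNIV F" and F_le: "\<And>\<sigma>. norm (F \<sigma>) \<le> b * deriv \<mu> \<sigma> / \<mu> \<sigma>" and "b \<ge> 0"
  obtains h where "bounded (range h)" "\<And>u. (h has_vector_derivative A u *v h u + F u) (at u)"
proof -
  define I where "I = (\<lambda>\<sigma>. T 0 \<sigma> *v (P \<sigma> *v F \<sigma>))"
  define J where "J = (\<lambda>\<sigma>. T 0 \<sigma> *v (F \<sigma> - P \<sigma> *v F \<sigma>))"
  have I: "continuous_on UNIV I" and J: "continuous_on UNIV J"
    unfolding I_def J_def using F by (rule continuous_on_T_P_apply, rule continuous_on_T_Q_apply)
  define a where "a = (\<lambda>n::nat. integral {- real n..0} I)"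
  define c where "c = (\<lambda>n::nat. integral {0..real n} J)"
  have a: "a \<longlonglongrightarrow> lim a" and c: "c \<longlonglongrightarrow> lim c"
    using convergent_integral_T_P[OF F F_le \<open>b \<ge> 0\<close>] convergent_integral_T_Q[OF F F_le \<open>b \<ge> 0\<close>]
    unfolding a_def c_def I_def J_def convergent_LIMSEQ_iff by auto
  define g where "g s = lim a - lim c + signed_integral 0 I s + signed_integral 0 J s" for s
  define h where "h s = T s 0 *v g s" for s
  have "(h has_vector_derivative A u *v h u + F u) (at u)" for u
  proof -
    have "(h has_vector_derivative T u 0 *v (0 + I u + J u) + (A u ** T u 0) *v g u) (at u)"
      unfolding h_def g_def
      by (intro bounded_bilinear.has_vector_derivative[OF bounded_bilinear_matrix_vector_mult T_deriv]
          has_vector_derivative_add has_vector_derivative_const signed_integral_has_vector_derivative I J)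
    then show ?thesis
      by (simp add: h_def I_def J_def T_inverse matrix_vector_mul_assoc[symmetric] algebra_simps)
  qed
  moreover have "norm (h s) \<le> 2 * (K * b / \<alpha>)" for s
  proof (rule Lim_norm_ubound[OF trivial_limit_sequentially])
    show "(\<lambda>n. T s 0 *v (a n - c n + signed_integral 0 I s + signed_integral 0 J s)) \<longlonglongrightarrow> h s"
      unfolding h_def g_def
      by (intro bounded_linear.tendsto[OF matrix_vector_mul_bounded_linear] tendsto_intros a c)
    have "\<forall>\<^sub>F n in sequentially. \<bar>s\<bar> \<le> real n"
      using filterlim_real_sequentially by (simp add: filterlim_at_top)
    then show "\<forall>\<^sub>F n in sequentially.
        norm (T s 0 *v (a n - c n + signed_integral 0 I s + signed_integral 0 J s)) \<le> 2 * (K * b / \<alpha>)"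
    proof (rule eventually_mono)
      fix n assume n: "\<bar>s\<bar> \<le> real n"
      have "T s 0 *v (a n - c n + signed_integral 0 I s + signed_integral 0 J s)
          = integral {- real n..s} (\<lambda>\<sigma>. T s \<sigma> *v (P \<sigma> *v F \<sigma>))
            - integral {s..real n} (\<lambda>\<sigma>. T s \<sigma> *v (F \<sigma> - P \<sigma> *v F \<sigma>))"
        unfolding a_def c_def I_def J_def by (rule truncated_green_eq[OF F]) (use n in auto)
      then show "norm (T s 0 *v (a n - c n + signed_integral 0 I s + signed_integral 0 J s))
          \<le> 2 * (K * b / \<alpha>)"
        using norm_truncated_green_le[OF F F_le \<open>b \<ge> 0\<close>, of "- real n" s "real n"] n by simp
    qed
  qed
  then have "bounded (range h)"
    unfolding bounded_iff by blast
  ultimately show thesis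
    using that by blast
qed

lemma bounded_solutions_eq:
  assumes "bounded (range z\<^sub>1)" "bounded (range z\<^sub>2)"
    and z\<^sub>1: "\<And>t. (z\<^sub>1 has_vector_derivative A t *v z\<^sub>1 t + \<Phi> t (z\<^sub>1 t)) (at t)"
    and z\<^sub>2: "\<And>t. (z\<^sub>2 has_vector_derivative A t *v z\<^sub>2 t + \<Phi> t (z\<^sub>2 t)) (at t)"
    and cont: "continuous_on UNIV (\<lambda>t. \<Phi> t (z\<^sub>1 t))" "continuous_on UNIV (\<lambda>t. \<Phi> t (z\<^sub>2 t))"
    and lip: "\<And>t u v. norm (\<Phi> t u - \<Phi> t v) \<le> c * deriv \<mu> t / \<mu> t * norm (u - v)"
    and "c \<ge> 0" "2 * K * c / \<alpha> < 1"
  shows "z\<^sub>1 = z\<^sub>2"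
proof
  fix s
  have "(\<lambda>t. z\<^sub>1 t - z\<^sub>2 t) s = 0"
  proof (rule bounded_solution_eq_0)
    show "bounded (range (\<lambda>t. z\<^sub>1 t - z\<^sub>2 t))"
      using bounded_minus_comp[OF assms(1,2)] .
    show "continuous_on UNIV (\<lambda>t. \<Phi> t (z\<^sub>1 t) - \<Phi> t (z\<^sub>2 t))"
      by (rule continuous_on_diff[OF cont])
    show "((\<lambda>t. z\<^sub>1 t - z\<^sub>2 t) has_vector_derivative
        A t *v (z\<^sub>1 t - z\<^sub>2 t) + (\<Phi> t (z\<^sub>1 t) - \<Phi> t (z\<^sub>2 t))) (at t)" for t
      using has_vector_derivative_diff[OF z\<^sub>1 z\<^sub>2] by (simp add: matrix_vector_mult_diff_distrib algebra_simps)
  qed (use lip assms(8,9) in auto)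
  then show "z\<^sub>1 s = z\<^sub>2 s" by simp
qed

end

section \<open>The perturbed system\<close>

locale perturbed_dichotomy = algebraic_dichotomy A T \<mu> P K \<alpha>
  for A :: "real \<Rightarrow> real^'n^'n" and T \<mu> P K \<alpha> +
  fixes f :: "real \<Rightarrow> real^'n \<Rightarrow> real^'n" and \<beta> \<gamma> :: real
  assumes A_cont: "continuous_on UNIV A"
    and f_cont: "continuous_on UNIV (\<lambda>(t, x). f t x)"
    and beta_nn: "\<beta> \<ge> 0" and gamma_nn: "\<gamma> \<ge> 0"
    and f_bdd: "\<And>t x. norm (f t x) \<le> \<beta> * deriv \<mu> t / \<mu> t"
    and f_lip: "\<And>t x1 x2. norm (f t x1 - f t x2) \<le> \<gamma> * deriv \<mu> t / \<mu> t * norm (x1 - x2)"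
    and small: "2 * K * \<gamma> / \<alpha> < 1"
begin

lemma perturbed_field_bounds:
  assumes "a \<ge> 0" and a: "\<And>t x. norm (A t *v x) \<le> a * norm x"
  defines "L \<equiv> \<lambda>t. a + (\<beta> + \<gamma>) * (deriv \<mu> t / \<mu> t)"
  shows "norm ((A t *v u + f t u) - (A t *v v + f t v)) \<le> L t * norm (u - v)"
    and "norm (A t *v u + f t u) \<le> L t * (norm u + 1)"
proof -
  have "\<gamma> * (deriv \<mu> t / \<mu> t) \<le> (\<beta> + \<gamma>) * (deriv \<mu> t / \<mu> t)"
    and "\<beta> * (deriv \<mu> t / \<mu> t) \<le> (\<beta> + \<gamma>) * (deriv \<mu> t / \<mu> t)"
    using beta_nn gamma_nn deriv_mu_div_nonneg[of t] by (intro mult_right_mono; simp)+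
  moreover have "0 \<le> \<beta> * (deriv \<mu> t / \<mu> t)"
    using beta_nn deriv_mu_div_nonneg[of t] by (rule mult_nonneg_nonneg)
  ultimately have L: "a + \<gamma> * (deriv \<mu> t / \<mu> t) \<le> L t" "a \<le> L t" "\<beta> * (deriv \<mu> t / \<mu> t) \<le> L t"
    using \<open>a \<ge> 0\<close> unfolding L_def by linarith+
  have "norm ((A t *v u + f t u) - (A t *v v + f t v)) \<le> a * norm (u - v) + \<gamma> * deriv \<mu> t / \<mu> t * norm (u - v)"
    using norm_triangle_ineq[of "A t *v (u - v)" "f t u - f t v"] a[of t "u - v"] f_lip[of t u v]
    by (simp add: matrix_vector_mult_diff_distrib algebra_simps)
  also have "\<dots> = (a + \<gamma> * (deriv \<mu> t / \<mu> t)) * norm (u - v)"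
    by (simp add: algebra_simps)
  also have "\<dots> \<le> L t * norm (u - v)"
    using L(1) by (rule mult_right_mono) simp
  finally show "norm ((A t *v u + f t u) - (A t *v v + f t v)) \<le> L t * norm (u - v)" .
  have "norm (A t *v u + f t u) \<le> a * norm u + \<beta> * (deriv \<mu> t / \<mu> t)"
    using norm_triangle_ineq[of "A t *v u" "f t u"] a[of t u] f_bdd[of t u] by simp
  also have "\<dots> \<le> L t * norm u + L t"
    using L(2,3) by (intro add_mono mult_right_mono) auto
  finally show "norm (A t *v u + f t u) \<le> L t * (norm u + 1)"
    by (simp add: algebra_simps)
qed

lemma lipschitz_ode_perturbed_field:
  obtains L \<psi> where "lipschitz_ode (\<lambda>t x. A t *v x + f t x) L \<psi>"
proof -
  obtain a where "a \<ge> 0" and a: "\<And>t x. norm (A t *v x) \<le> a * norm x"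
    using A_bound by metis
  define L where "L t = a + (\<beta> + \<gamma>) * (deriv \<mu> t / \<mu> t)" for t
  define \<psi> where "\<psi> t = a * t + (\<beta> + \<gamma>) * ln (\<mu> t)" for t
  have "lipschitz_ode (\<lambda>t x. A t *v x + f t x) L \<psi>"
  proof
    have "continuous_on UNIV (\<lambda>p :: real \<times> (real^'n). A (fst p) *v snd p)"
      by (intro bounded_bilinear.continuous_on[OF bounded_bilinear_matrix_vector_mult]
          continuous_on_compose2[OF A_cont continuous_on_fst] continuous_on_snd) auto
    then show "continuous_on UNIV (\<lambda>(t, x). A t *v x + f t x)"
      using continuous_on_add[OF _ f_cont] by (simp add: case_prod_beta')
    show "(\<psi> has_real_derivative L t) (at t)" for t
      unfolding \<psi>_def L_def by (auto intro!: derivative_eq_intros mu_has_derivative mu_pos)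
    show "L t \<ge> 0" for t
      unfolding L_def using \<open>a \<ge> 0\<close> beta_nn gamma_nn deriv_mu_div_nonneg[of t]
      by (intro add_nonneg_nonneg mult_nonneg_nonneg) auto
  qed (use perturbed_field_bounds[OF \<open>a \<ge> 0\<close> a] in \<open>simp_all add: L_def\<close>)
  then show thesis by (rule that)
qed

lemma Xsol_solves:
  shows "Xsol A f \<tau> \<xi> \<tau> = \<xi>"
    and "(Xsol A f \<tau> \<xi> has_vector_derivative A t *v Xsol A f \<tau> \<xi> t + f t (Xsol A f \<tau> \<xi> t)) (at t)"
proof -
  obtain L \<psi> where "lipschitz_ode (\<lambda>t x. A t *v x + f t x) L \<psi>"
    by (rule lipschitz_ode_perturbed_field)
  then interpret lipschitz_ode "\<lambda>t x. A t *v x + f t x" L \<psi> .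
  from theI'[OF unique_solution] show "Xsol A f \<tau> \<xi> \<tau> = \<xi>"
    and "(Xsol A f \<tau> \<xi> has_vector_derivative A t *v Xsol A f \<tau> \<xi> t + f t (Xsol A f \<tau> \<xi> t)) (at t)"
    unfolding Xsol_def by auto
qed

lemma Ysol_eqI:
  assumes "y \<tau> = \<xi>" and y: "\<And>t. (y has_vector_derivative A t *v y t) (at t)"
  shows "Ysol A \<tau> \<xi> = y"
  unfolding Ysol_def
proof (rule the_equality)
  show "y \<tau> = \<xi> \<and> (\<forall>t. (y has_vector_derivative A t *v y t) (at t))"
    using assms by blast
  fix x assume "x \<tau> = \<xi> \<and> (\<forall>t. (x has_vector_derivative A t *v x t) (at t))"
  then show "x = y"
    using linear_solutions_eq[of x y \<tau>] y \<open>y \<tau> = \<xi>\<close> by auto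
qed

lemma hsol_eqI:
  assumes "bounded (range h)"
    and h: "\<And>t. (h has_vector_derivative A t *v h t - f t (Xsol A f \<tau> \<xi> t)) (at t)"
  shows "hsol A f \<tau> \<xi> = h"
  unfolding hsol_def
proof (rule the_equality)
  show "bounded (range h) \<and> (\<forall>t. (h has_vector_derivative A t *v h t - f t (Xsol A f \<tau> \<xi> t)) (at t))"
    using assms by blast
  have cont: "continuous_on UNIV (\<lambda>t. - f t (Xsol A f \<tau> \<xi> t))"
    using Xsol_solves(2)
    by (intro continuous_on_minus continuous_on_curried_comp[OF f_cont] continuous_on_if_has_vector_derivative)
  fix z
  assume z: "bounded (range z) \<and> (\<forall>t. (z has_vector_derivative A t *v z t - f t (Xsol A f \<tau> \<xi> t)) (at t))"
  show "z = h"
  proof (rule bounded_solutions_eq[where \<Phi> = "\<lambda>t _. - f t (Xsol A f \<tau> \<xi> t)" and c = 0])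
    show "(z has_vector_derivative A t *v z t + - f t (Xsol A f \<tau> \<xi> t)) (at t)" for t
      using z by simp
    show "(h has_vector_derivative A t *v h t + - f t (Xsol A f \<tau> \<xi> t)) (at t)" for t
      using h[of t] by simp
  qed (use z assms cont K_pos alpha_pos in simp_all)
qed

lemma gsol_eqI:
  assumes "bounded (range g)"
    and g: "\<And>t. (g has_vector_derivative A t *v g t + f t (Ysol A \<tau> \<xi> t + g t)) (at t)"
    and Y: "\<And>t. (Ysol A \<tau> \<xi> has_vector_derivative A t *v Ysol A \<tau> \<xi> t) (at t)"
  shows "gsol A f \<tau> \<xi> = g"
  unfolding gsol_def
proof (rule the_equality)
  show "bounded (range g) \<and> (\<forall>t. (g has_vector_derivative A t *v g t + f t (Ysol A \<tau> \<xi> t + g t)) (at t))"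
    using assms by blast
  have cont: "continuous_on UNIV (\<lambda>t. f t (Ysol A \<tau> \<xi> t + z t))"
    if "\<And>t. (z has_vector_derivative A t *v z t + f t (Ysol A \<tau> \<xi> t + z t)) (at t)" for z
    using Y that
    by (intro continuous_on_curried_comp[OF f_cont] continuous_on_add continuous_on_if_has_vector_derivative)
  fix z
  assume z: "bounded (range z) \<and> (\<forall>t. (z has_vector_derivative A t *v z t + f t (Ysol A \<tau> \<xi> t + z t)) (at t))"
  show "z = g"
  proof (rule bounded_solutions_eq[where \<Phi> = "\<lambda>t u. f t (Ysol A \<tau> \<xi> t + u)" and c = \<gamma>])
    show "norm (f t (Ysol A \<tau> \<xi> t + u) - f t (Ysol A \<tau> \<xi> t + v)) \<le> \<gamma> * deriv \<mu> t / \<mu> t * norm (u - v)" for t u v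
      using f_lip[of t "Ysol A \<tau> \<xi> t + u" "Ysol A \<tau> \<xi> t + v"] by simp
  qed (use z assms cont gamma_nn small in auto)
qed

lemma Gmap_Hmap: "Gmap A f t (Hmap A f t x) = x"
proof -
  define X where "X = Xsol A f t x"
  have X: "(X has_vector_derivative A s *v X s + f s (X s)) (at s)" for s
    unfolding X_def by (rule Xsol_solves(2))
  have cont: "continuous_on UNIV (\<lambda>s. - f s (X s))"
    using X
    by (intro continuous_on_minus continuous_on_curried_comp[OF f_cont] continuous_on_if_has_vector_derivative)
  have "norm (- f s (X s)) \<le> \<beta> * deriv \<mu> s / \<mu> s" for s
    using f_bdd by simp
  then obtain h where "bounded (range h)"
    and h: "\<And>s. (h has_vector_derivative A s *v h s + - f s (X s)) (at s)"
    using bounded_solution_exists[OF cont _ beta_nn] by blast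
  have "hsol A f t x = h"
    using hsol_eqI[OF \<open>bounded (range h)\<close>] h by (simp add: X_def)
  then have H: "Hmap A f t x = X t + h t"
    by (simp add: Hmap_def X_def Xsol_solves(1))
  have Y_sum: "((\<lambda>s. X s + h s) has_vector_derivative A s *v (X s + h s)) (at s)" for s
    using has_vector_derivative_add[OF X h] by (simp add: matrix_vector_right_distrib)
  have Y: "Ysol A t (Hmap A f t x) = (\<lambda>s. X s + h s)"
    unfolding H by (rule Ysol_eqI[OF refl Y_sum])
  have "gsol A f t (Hmap A f t x) = (\<lambda>s. - h s)"
  proof (rule gsol_eqI)
    show "bounded (range (\<lambda>s. - h s))"
      using \<open>bounded (range h)\<close> by simp
    show "((\<lambda>s. - h s) has_vector_derivative
        A s *v (- h s) + f s (Ysol A t (Hmap A f t x) s + - h s)) (at s)" for s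
      using has_vector_derivative_minus[OF h] linear_neg[OF matrix_vector_mul_linear, of "A s" "h s"]
      by (simp add: Y)
  qed (use Y Y_sum in simp)
  then show ?thesis
    by (simp add: Gmap_def H X_def Xsol_solves(1))
qed

end

theorem lemma3p8:
  fixes A :: "real \<Rightarrow> real^'n^'n"
    and T :: "real \<Rightarrow> real \<Rightarrow> real^'n^'n"
    and \<mu> :: "real \<Rightarrow> real"
    and P :: "real \<Rightarrow> real^'n^'n"
    and K \<alpha> \<beta> \<gamma> :: real
    and f :: "real \<Rightarrow> real^'n \<Rightarrow> real^'n"
  assumes A_cont: "continuous_on UNIV A"
    and A_bdd: "bounded (range A)"
    and T_init: "\<And>s. T s s = mat 1"
    and T_deriv: "\<And>t s. ((\<lambda>u. T u s) has_vector_derivative (A t ** T t s)) (at t)"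
    and mu_pos: "\<And>t. \<mu> t > 0"
    and mu_mono: "mono \<mu>"
    and mu_diff: "\<And>t. \<mu> differentiable (at t)"
    and mu_0: "\<mu> 0 = 1"
    and mu_bot: "(\<mu> \<longlongrightarrow> 0) at_bot"
    and mu_top: "filterlim \<mu> at_top at_top"
    and P_proj: "\<And>s. P s ** P s = P s"
    and K_pos: "K > 0" and alpha_pos: "\<alpha> > 0"
    and TP_comm: "\<And>t s. T t s ** P s = P t ** T t s"
    and dich_P: "\<And>t s. t \<ge> s \<Longrightarrow>
        opnorm (T t s ** P s) \<le> K * (\<mu> t / \<mu> s) powr (-\<alpha>)"
    and dich_Q: "\<And>t s. t \<le> s \<Longrightarrow>
        opnorm (T t s ** (mat 1 - P s)) \<le> K * (\<mu> s / \<mu> t) powr (-\<alpha>)"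
    and f_cont: "continuous_on UNIV (\<lambda>(t, x). f t x)"
    and beta_nn: "\<beta> \<ge> 0" and gamma_nn: "\<gamma> \<ge> 0"
    and f_bdd: "\<And>t x. norm (f t x) \<le> \<beta> * deriv \<mu> t / \<mu> t"
    and f_lip: "\<And>t x1 x2. norm (f t x1 - f t x2) \<le> \<gamma> * deriv \<mu> t / \<mu> t * norm (x1 - x2)"
    and small: "6 * K * \<gamma> / \<alpha> < 1"
  shows "\<forall>t x. Gmap A f t (Hmap A f t x) = x"
proof -
  have "2 * K * \<gamma> / \<alpha> \<le> 6 * K * \<gamma> / \<alpha>"
    using K_pos gamma_nn alpha_pos by (intro divide_right_mono mult_right_mono) auto
  with small have "2 * K * \<gamma> / \<alpha> < 1"
    by linarith
  interpret perturbed_dichotomy A T \<mu> P K \<alpha> f \<beta> \<gamma>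
    by unfold_locales (fact assms \<open>2 * K * \<gamma> / \<alpha> < 1\<close>)+
  show ?thesis
    using Gmap_Hmap by blast
qed

end
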